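(* Let $k\ge 1$ be an integer and $\lambda\in[0,1]$. Define $\beta(k)=\sum_{i=0}^{k-1}\lambda^{-i}$ if $\lambda>0$ and $\beta(k)=\infty$ if $\lambda=0$, and \[ \alpha(k)=\begin{cases}1+2\lambda+2\lambda^2+\dots+2\lambda^{(k-1)/2} & \text{if } k \text{ is odd},\\ 1+2\lambda+2\lambda^2+\dots+2\lambda^{k/2-1}+\lambda^{k/2} & \text{if } k \text{ is even.}\end{cases} \] Then there exists a deterministic learning-augmented memory-constrained online algorithm $\mathcal{A}$ for the $k$-server problem on the line such that for every instance $I$ and every prediction for $I$ with prediction error $\eta$, \[ \mathcal{A}(I)\le \min\left\{\alpha(k)\left(1+\frac{\eta}{\mathrm{OPT}(I)}\right),\ \beta(k)\right\}\cdot \mathrm{OPT}(I)+c, \] where $c\ge 0$ depends only on the initial configuration. In particular, for $\lambda>0$ the algorithm is $\alpha(k)$-consistent and $\beta(k)$-robust.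
   Context: The $k$-server problem on the line: $k$ servers start at given positions on $\mathbb{R}$ (initial configuration $C_0$); requests $r_1,\dots,r_n\in\mathbb{R}$ arrive online one by one, and each must be served (before the next is revealed) by moving at least one server to the requested point; cost is the total distance traveled by all servers. Servers are labeled by position, $s_1\le\dots\le s_k$ (overtakings are uncrossed). $\mathrm{OPT}(I)$ is the minimum cost of serving instance $I$ offline. A prediction for an instance with $n$ requests is a sequence $p_1,\dots,p_n\in\{1,\dots,k\}$; $s_{p_t}$ is the predicted server for request $t$. The algorithm FtP ("follow the predictions") serves each request $r_t$ by moving server $s_{p_t}$ to it (then relabeling servers by position order); $\mathrm{FtP}(I)$ is its cost, and the prediction error is $\eta=\mathrm{FtP}(I)-\mathrm{OPT}(I)$. A learning-augmented algorithm receives $p_t$ together with $r_t$. It is $\alpha$-consistent if $\mathcal{A}(I)\le\alpha\,\mathrm{OPT}(I)+c$ for every instance and every prediction with $\eta=0$, and $\beta$-robust if $\mathcal{A}(I)\le\beta\,\mathrm{OPT}(I)+c$ for every instance and every prediction, where $c$ depends only on the initial configuration. An algorithm is memory-constrained if its decision on each request depends only on the current server configuration, the current request and the current prediction (not on previous requests); it may move several servers per request; and its memory is erasable: for any set of $k$ distinct points and any starting configuration there is a finite sequence of requests among these $k$ points after which each of these points holds exactly one server (such a sequence is called a force to these points). *)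

theory Defs
  imports Complex_Main
begin

text \<open>A configuration of k servers is the sorted list of their positions
  (servers labelled s_1 <= ... <= s_k by position; list index i-1 = label i).\<close>

definition valid_config :: "nat \<Rightarrow> real list \<Rightarrow> bool" where
  "valid_config k C \<longleftrightarrow> length C = k \<and> sorted C"

text \<open>Cost of moving from configuration C to configuration D, servers matched
  by position order (overtakings uncrossed).\<close>
definition move_cost :: "real list \<Rightarrow> real list \<Rightarrow> real" where
  "move_cost C D = (\<Sum>i<length C. \<bar>C ! i - D ! i\<bar>)"

text \<open>A prediction for requests rs: one predicted server label in {1..k} per request.\<close>
definition valid_prediction :: "nat \<Rightarrow> real list \<Rightarrow> nat list \<Rightarrow> bool" where
  "valid_prediction k rs ps \<longleftrightarrow> length ps = length rs \<and> (\<forall>p\<in>set ps. 1 \<le> p \<and> p \<le> k)"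

fun path_cost :: "real list \<Rightarrow> real list list \<Rightarrow> real" where
  "path_cost C [] = 0"
| "path_cost C (D # Ds) = move_cost C D + path_cost D Ds"

definition OPT :: "nat \<Rightarrow> real list \<Rightarrow> real list \<Rightarrow> real" where
  "OPT k C0 rs = Inf {path_cost C0 Ds | Ds. length Ds = length rs \<and>
      (\<forall>t<length rs. valid_config k (Ds ! t) \<and> rs ! t \<in> set (Ds ! t))}"

text \<open>Follow the predictions: move server s_p to the request, then relabel.\<close>
fun ftp_cost :: "real list \<Rightarrow> real list \<Rightarrow> nat list \<Rightarrow> real" where
  "ftp_cost C (r # rs) (p # ps) = \<bar>C ! (p - 1) - r\<bar> + ftp_cost (sort (C[p - 1 := r])) rs ps"
| "ftp_cost C _ _ = 0"

definition pred_error :: "nat \<Rightarrow> real list \<Rightarrow> real list \<Rightarrow> nat list \<Rightarrow> real" where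
  "pred_error k C0 rs ps = ftp_cost C0 rs ps - OPT k C0 rs"

text \<open>Such an algorithm is a map (current configuration, request, prediction)
  \<mapsto> new configuration.\<close>
type_synonym mc_alg = "real list \<Rightarrow> real \<Rightarrow> nat \<Rightarrow> real list"

fun alg_final :: "mc_alg \<Rightarrow> real list \<Rightarrow> real list \<Rightarrow> nat list \<Rightarrow> real list" where
  "alg_final A C (r # rs) (p # ps) = alg_final A (A C r p) rs ps"
| "alg_final A C _ _ = C"

fun alg_cost :: "mc_alg \<Rightarrow> real list \<Rightarrow> real list \<Rightarrow> nat list \<Rightarrow> real" where
  "alg_cost A C (r # rs) (p # ps) = move_cost C (A C r p) + alg_cost A (A C r p) rs ps"
| "alg_cost A C _ _ = 0"

definition serves :: "nat \<Rightarrow> mc_alg \<Rightarrow> bool" where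
  "serves k A \<longleftrightarrow> (\<forall>C r p. valid_config k C \<and> 1 \<le> p \<and> p \<le> k \<longrightarrow>
       valid_config k (A C r p) \<and> r \<in> set (A C r p))"

definition erasable :: "nat \<Rightarrow> mc_alg \<Rightarrow> bool" where
  "erasable k A \<longleftrightarrow> (\<forall>P C. finite P \<and> card P = k \<and> valid_config k C \<longrightarrow>
      (\<exists>rs ps. set rs \<subseteq> P \<and> valid_prediction k rs ps \<and>
               alg_final A C rs ps = sorted_list_of_set P))"

definition memory_constrained :: "nat \<Rightarrow> mc_alg \<Rightarrow> bool" where
  "memory_constrained k A \<longleftrightarrow> serves k A \<and> erasable k A"

definition alpha :: "real \<Rightarrow> nat \<Rightarrow> real" where
  "alpha lam k = (if odd k then 1 + 2 * (\<Sum>i=1..(k - 1) div 2. lam ^ i)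
                else 1 + 2 * (\<Sum>i=1..k div 2 - 1. lam ^ i) + lam ^ (k div 2))"

text \<open>beta for lambda > 0 (beta = infinity when lambda = 0 is handled in the bound).\<close>
definition beta :: "real \<Rightarrow> nat \<Rightarrow> real" where
  "beta lam k = (\<Sum>i<k. (1 / lam) ^ i)"

text \<open>min{alpha (1 + eta/OPT), beta} * OPT, multiplied out (OPT >= 0).\<close>
definition LA_bound :: "real \<Rightarrow> nat \<Rightarrow> real \<Rightarrow> real \<Rightarrow> real" where
  "LA_bound lam k opt eta = (if lam = 0 then alpha lam k * (opt + eta)
                          else min (alpha lam k * (opt + eta)) (beta lam k * opt))"

end

theory Submission
  imports Defs "HOL-Library.Multiset"
begin

text \<open>\<open>\<lambda>\<close>-DC serves a request lying between two adjacent servers by moving the one on the side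
  of the predicted server at speed 1 and the other one at speed \<open>\<lambda>\<close>. Both bounds come from the
  potential \<open>\<Phi>\<^sub>\<mu>(X, Y) = \<Sum>\<^sub>j a\<^sub>j \<bar>X\<^sub>j - Y\<^sub>j\<bar> + \<Sum>\<^sub>j w\<^sub>j X\<^sub>j\<close> with
  \<open>a\<^sub>j = 1 + S(j) + S(k-1-j)\<close>, \<open>w\<^sub>j = S(j) - S(k-1-j)\<close> and \<open>S(n) = \<mu> + \<dots> + \<mu>\<^sup>n\<close>.
  For \<open>\<mu> = \<lambda>\<close> a step of the algorithm costs at most \<open>\<alpha>(k)\<close> times the step of FtP minus the
  increase of \<open>\<Phi>\<^sub>\<lambda>(X, Y)\<close>, where \<open>Y\<close> is the configuration of FtP; \<open>\<alpha>(k)\<close> is the weight of the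
  middle server. For \<open>\<mu> = 1/\<lambda>\<close> the same holds with \<open>\<beta>(k)\<close>, the largest weight, against any
  offline solution. \<open>\<Phi>\<close> is nonnegative on sorted configurations and \<open>\<Phi>(C\<^sub>0, C\<^sub>0)\<close> is the
  additive constant. Requests left of the predicted server are reduced to the other case by
  reflecting the line.

  The memory is erasable: repeatedly requesting the target of the rightmost server that lies
  left of its target pushes every server to or beyond its target, and the reflected procedure
  then brings all servers onto their targets.\<close>

lemma sum_lessThan_update:
  fixes h g :: "nat \<Rightarrow> real"
  assumes "j < k" "\<And>m. m < k \<Longrightarrow> m \<noteq> j \<Longrightarrow> h m = g m"
  shows "(\<Sum>m<k. h m) = (\<Sum>m<k. g m) + (h j - g j)"
  using assms sum.remove[of "{..<k}" j h] sum.remove[of "{..<k}" j g]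
  by (simp add: sum.cong[of "{..<k} - {j}" _ h g])

lemma sum_lessThan_update2:
  fixes h g :: "nat \<Rightarrow> real"
  assumes "Suc i < k" "\<And>m. m < k \<Longrightarrow> m \<noteq> i \<Longrightarrow> m \<noteq> Suc i \<Longrightarrow> h m = g m"
  shows "(\<Sum>m<k. h m) = (\<Sum>m<k. g m) + (h i - g i) + (h (Suc i) - g (Suc i))"
proof -
  define g' where "g' m = (if m = i then h i else g m)" for m
  have "(\<Sum>m<k. h m) = (\<Sum>m<k. g' m) + (h (Suc i) - g' (Suc i))"
    using assms by (intro sum_lessThan_update) (auto simp: g'_def)
  moreover have "(\<Sum>m<k. g' m) = (\<Sum>m<k. g m) + (g' i - g i)"
    using assms by (intro sum_lessThan_update) (auto simp: g'_def)
  ultimately show ?thesis by (simp add: g'_def)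
qed

lemma sum_lessThan_telescope:
  fixes g :: "nat \<Rightarrow> real"
  assumes "a \<le> b" "b < k"
    and "\<And>j. j < k \<Longrightarrow> f j =
      (if a \<le> j \<and> j < b then g (Suc j) - g j else if j = b then c - g b else 0)"
  shows "(\<Sum>j<k. f j) = c - g a"
proof -
  have "(\<Sum>j<k. f j) = (\<Sum>j<k. (if j \<in> {a..<b} then g (Suc j) - g j else 0) + (if j = b then c - g b else 0))"
    by (rule sum.cong) (use assms in auto)
  also have "\<dots> = (\<Sum>j\<in>{..<k} \<inter> {a..<b}. g (Suc j) - g j) + (c - g b)"
    using assms by (simp add: sum.distrib sum.inter_restrict)
  also have "{..<k} \<inter> {a..<b} = {a..<b}" using assms by auto
  finally show ?thesis using sum_Suc_diff'[OF assms(1), of g] by simp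
qed

lemma sorted_list_update:
  assumes "sorted X" "j < length X" "0 < j \<Longrightarrow> X ! (j - 1) \<le> u" "Suc j < length X \<Longrightarrow> u \<le> X ! Suc j"
  shows "sorted (X[j := u])"
  unfolding sorted_iff_nth_Suc
proof (intro allI impI)
  fix n assume n: "Suc n < length (X[j := u])"
  then show "X[j := u] ! n \<le> X[j := u] ! Suc n"
    using assms sorted_iff_nth_Suc[of X] by (cases "n = j"; cases "Suc n = j") (auto simp: nth_list_update)
qed

lemma sorted_list_update2:
  assumes "sorted X" "Suc i < length X" "X ! i \<le> u" "u \<le> v" "v \<le> X ! Suc i"
  shows "sorted (X[i := u, Suc i := v])"
proof -
  have "X ! (i - 1) \<le> X ! i" "Suc (Suc i) < length X \<Longrightarrow> X ! Suc i \<le> X ! Suc (Suc i)"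
    using assms by (auto intro: sorted_nth_mono)
  note neighbours = this
  have "sorted (X[i := u])"
    by (rule sorted_list_update) (use assms neighbours in auto)
  then show ?thesis
    by (rule sorted_list_update) (use assms neighbours in auto)
qed

lemma sorted_mem_gap:
  assumes "sorted Y" "r \<in> set Y" "Suc i < length Y"
  shows "r \<le> Y ! i \<or> Y ! Suc i \<le> r"
proof -
  obtain q where q: "q < length Y" "Y ! q = r" using assms(2) by (auto simp: in_set_conv_nth)
  then show ?thesis
    using assms sorted_nth_mono[OF assms(1), of q i] sorted_nth_mono[OF assms(1), of "Suc i" q]
    by (cases "q \<le> i") auto
qed

lemma sorted_mem_le_last:
  assumes "sorted Y" "r \<in> set Y"
  shows "r \<le> Y ! (length Y - 1)"
  using assms sorted_nth_mono[OF assms(1), of _ "length Y - 1"] by (auto simp: in_set_conv_nth)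

definition geom_sum :: "real \<Rightarrow> nat \<Rightarrow> real" where
  "geom_sum mu n = (\<Sum>d=1..n. mu ^ d)"

lemma geom_sum_0 [simp]: "geom_sum mu 0 = 0"
  by (simp add: geom_sum_def)

lemma geom_sum_Suc: "geom_sum mu (Suc n) = geom_sum mu n + mu ^ Suc n"
  by (simp add: geom_sum_def)

lemma geom_sum_Suc_eq_mult: "geom_sum mu (Suc n) = mu * (1 + geom_sum mu n)"
proof (induction n)
  case (Suc n)
  have "geom_sum mu (Suc (Suc n)) = mu * (1 + geom_sum mu n) + mu * mu ^ Suc n"
    by (simp only: geom_sum_Suc[of mu "Suc n"] Suc.IH power_Suc[of mu "Suc n"])
  also have "\<dots> = mu * (1 + geom_sum mu (Suc n))"
    by (simp add: geom_sum_Suc algebra_simps)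
  finally show ?case .
qed (simp add: geom_sum_def)

lemma geom_sum_add: "geom_sum mu (n + m) = geom_sum mu n + mu ^ n * geom_sum mu m"
  by (induction m) (auto simp: geom_sum_Suc algebra_simps power_add)

lemma one_plus_geom_sum: "1 + geom_sum mu n = (\<Sum>i<Suc n. mu ^ i)"
  by (induction n) (simp_all add: geom_sum_Suc)

lemma geom_sum_nonneg: "0 \<le> mu \<Longrightarrow> 0 \<le> geom_sum mu n"
  by (simp add: geom_sum_def sum_nonneg)

lemma geom_sum_mono: "0 \<le> mu \<Longrightarrow> n \<le> m \<Longrightarrow> geom_sum mu n \<le> geom_sum mu m"
  using geom_sum_add[of mu n "m - n"] geom_sum_nonneg[of mu "m - n"] by simp

lemma geom_sum_subadd:
  assumes "0 \<le> mu" "mu \<le> 1"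
  shows "geom_sum mu (n + m) \<le> geom_sum mu n + geom_sum mu m"
proof -
  have "mu ^ n * geom_sum mu m \<le> geom_sum mu m"
    using assms geom_sum_nonneg by (simp add: mult_left_le_one_le power_le_one)
  then show ?thesis by (simp add: geom_sum_add)
qed

lemma geom_sum_superadd:
  assumes "1 \<le> mu"
  shows "geom_sum mu n + geom_sum mu m \<le> geom_sum mu (n + m)"
proof -
  have "geom_sum mu m \<le> mu ^ n * geom_sum mu m"
    using assms geom_sum_nonneg[of mu m] by (simp add: mult_le_cancel_right1 one_le_power)
  then show ?thesis by (simp add: geom_sum_add)
qed

lemma geom_sum_concave:
  assumes "0 \<le> mu" "mu \<le> 1" "a \<le> c" "c \<le> b'" "a + b = c + b'"
  shows "geom_sum mu a + geom_sum mu b \<le> geom_sum mu c + geom_sum mu b'"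
proof -
  have "b = b' + (c - a)" "c = a + (c - a)" using assms by auto
  then have "geom_sum mu b = geom_sum mu b' + mu ^ b' * geom_sum mu (c - a)"
    and "geom_sum mu c = geom_sum mu a + mu ^ a * geom_sum mu (c - a)"
    by (metis geom_sum_add)+
  moreover have "mu ^ b' * geom_sum mu (c - a) \<le> mu ^ a * geom_sum mu (c - a)"
    using assms geom_sum_nonneg by (intro mult_right_mono power_decreasing) auto
  ultimately show ?thesis by linarith
qed

lemma geom_sum_balanced:
  assumes "0 \<le> mu" "mu \<le> 1" "a + b = n"
  shows "geom_sum mu a + geom_sum mu b \<le> geom_sum mu (n div 2) + geom_sum mu (n - n div 2)"
proof -
  have "geom_sum mu a + geom_sum mu b \<le> geom_sum mu (n div 2) + geom_sum mu (n - n div 2)"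
    if "a \<le> b" "a + b = n" for a b
    using geom_sum_concave[OF assms(1,2), of a "n div 2" "n - n div 2" b] that by linarith
  from this[of a b] this[of b a] assms(3) show ?thesis
    by (cases "a \<le> b") (simp_all add: add.commute)
qed

text \<open>The weight \<open>a\<^sub>j\<close> and the tilt \<open>w\<^sub>j\<close> of the server with index \<open>j\<close> (counted from 0);
  the potential uses \<open>\<mu> = \<lambda>\<close> against FtP and \<open>\<mu> = 1/\<lambda>\<close> against an offline solution.\<close>

definition dc_weight :: "real \<Rightarrow> nat \<Rightarrow> nat \<Rightarrow> real" where
  "dc_weight mu k j = 1 + geom_sum mu j + geom_sum mu (k - 1 - j)"

definition dc_tilt :: "real \<Rightarrow> nat \<Rightarrow> nat \<Rightarrow> real" where
  "dc_tilt mu k j = geom_sum mu j - geom_sum mu (k - 1 - j)"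

lemma dc_weight_nonneg: "0 \<le> mu \<Longrightarrow> 0 \<le> dc_weight mu k j"
  by (simp add: dc_weight_def add_nonneg_nonneg geom_sum_nonneg)

lemma dc_weight_mirror: "j < k \<Longrightarrow> dc_weight mu k (k - Suc j) = dc_weight mu k j"
  by (simp add: dc_weight_def Suc_diff_Suc)

lemma dc_tilt_mirror: "j < k \<Longrightarrow> dc_tilt mu k (k - Suc j) = - dc_tilt mu k j"
  by (simp add: dc_tilt_def Suc_diff_Suc)

lemma dc_weight_ge:
  assumes "0 \<le> mu" "mu \<le> 1" "i < k" "j < k"
  shows "1 + geom_sum mu i \<le> dc_weight mu k j"
proof -
  have "geom_sum mu i \<le> geom_sum mu (j + (k - 1 - j))"
    using geom_sum_mono[OF assms(1)] assms by simp
  also have "\<dots> \<le> geom_sum mu j + geom_sum mu (k - 1 - j)"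
    by (rule geom_sum_subadd[OF assms(1,2)])
  finally show ?thesis unfolding dc_weight_def by linarith
qed

lemma dc_weight_le_middle:
  assumes "0 \<le> mu" "mu \<le> 1" "j < k"
  shows "dc_weight mu k j \<le> dc_weight mu k ((k - 1) div 2)"
  using geom_sum_balanced[OF assms(1,2), of j "k - 1 - j" "k - 1"] assms(3)
  by (simp add: dc_weight_def)

lemma dc_weight_le_geom_sum:
  assumes "1 \<le> mu" "j < k"
  shows "dc_weight mu k j \<le> 1 + geom_sum mu (k - 1)"
  using geom_sum_superadd[OF assms(1), of j "k - 1 - j"] assms(2) by (simp add: dc_weight_def)

lemma alpha_eq_dc_weight:
  assumes "1 \<le> k"
  shows "alpha lam k = dc_weight lam k ((k - 1) div 2)"
proof (cases "odd k")
  case True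
  then obtain m where "k = 2 * m + 1" by (metis oddE)
  then show ?thesis by (simp add: alpha_def dc_weight_def geom_sum_def)
next
  case False
  then obtain m where m: "k = 2 * m" by (metis evenE)
  then have "(k - 1) div 2 = m - 1" "k - 1 - (m - 1) = Suc (m - 1)" "Suc (m - 1) = m"
    using assms by auto
  with False m show ?thesis
    using geom_sum_Suc[of lam "m - 1"] by (simp add: alpha_def dc_weight_def geom_sum_def)
qed

lemma beta_eq_geom_sum:
  assumes "1 \<le> k"
  shows "beta lam k = 1 + geom_sum (1 / lam) (k - 1)"
  using one_plus_geom_sum[of "1 / lam" "k - 1"] assms by (simp add: beta_def)

lemma beta_pos:
  assumes "0 < lam" "1 \<le> k"
  shows "0 < beta lam k"
proof -
  have "0 \<le> geom_sum (1 / lam) (k - 1)" using assms(1) by (simp add: geom_sum_nonneg)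
  then show ?thesis using beta_eq_geom_sum[OF assms(2), of lam] by linarith
qed

lemma dc_weight_le_alpha:
  assumes "0 \<le> lam" "lam \<le> 1" "j < k"
  shows "dc_weight lam k j \<le> alpha lam k"
  using dc_weight_le_middle[OF assms] alpha_eq_dc_weight[of k lam] assms(3) by simp

lemma dc_weight_le_beta:
  assumes "0 < lam" "lam \<le> 1" "j < k"
  shows "dc_weight (1 / lam) k j \<le> beta lam k"
  using dc_weight_le_geom_sum[of "1 / lam" j k] beta_eq_geom_sum[of k lam] assms by simp

lemma two_geom_sum_le_alpha_plus_weight:
  assumes "0 \<le> lam" "lam \<le> 1" "i < k" "j < k"
  shows "2 * (1 + geom_sum lam i) \<le> alpha lam k + dc_weight lam k j"
proof -
  have "(k - 1) div 2 < k" using assms by auto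
  then show ?thesis
    using dc_weight_ge[OF assms(1,2,3), of j] dc_weight_ge[OF assms(1,2,3), of "(k - 1) div 2"]
      alpha_eq_dc_weight[of k lam] assms by simp
qed

lemma dc_weight_tilt_ends:
  assumes "1 \<le> k"
  shows "1 - dc_weight mu k 0 - dc_tilt mu k 0 = 0"
    and "1 - dc_weight mu k (k - 1) + dc_tilt mu k (k - 1) = 0"
  using assms by (simp_all add: dc_weight_def dc_tilt_def)

lemma dc_weight_tilt_gap:
  assumes "Suc i < k"
  shows "1 - dc_weight mu k i + dc_tilt mu k i = - 2 * mu * (1 + geom_sum mu (k - 2 - i))"
    and "1 + dc_weight mu k (Suc i) - dc_tilt mu k (Suc i) = 2 * (1 + geom_sum mu (k - 2 - i))"
    and "1 + dc_weight mu k i + dc_tilt mu k i = 2 * (1 + geom_sum mu i)"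
    and "1 - dc_weight mu k (Suc i) - dc_tilt mu k (Suc i) = - 2 * mu * (1 + geom_sum mu i)"
proof -
  have e: "k - 1 - i = Suc (k - 2 - i)" "k - 1 - Suc i = k - 2 - i" using assms by auto
  show "1 - dc_weight mu k i + dc_tilt mu k i = - 2 * mu * (1 + geom_sum mu (k - 2 - i))"
    "1 + dc_weight mu k (Suc i) - dc_tilt mu k (Suc i) = 2 * (1 + geom_sum mu (k - 2 - i))"
    unfolding dc_weight_def dc_tilt_def e geom_sum_Suc_eq_mult by simp_all
  show "1 + dc_weight mu k i + dc_tilt mu k i = 2 * (1 + geom_sum mu i)"
    "1 - dc_weight mu k (Suc i) - dc_tilt mu k (Suc i) = - 2 * mu * (1 + geom_sum mu i)"
    unfolding dc_weight_def dc_tilt_def geom_sum_Suc_eq_mult[of mu i] by simp_all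
qed

definition mirror :: "real list \<Rightarrow> real list" where
  "mirror X = rev (map uminus X)"

lemma length_mirror [simp]: "length (mirror X) = length X"
  by (simp add: mirror_def)

lemma nth_mirror: "j < length X \<Longrightarrow> mirror X ! j = - X ! (length X - Suc j)"
  by (simp add: mirror_def rev_nth)

lemma mirror_mirror [simp]: "mirror (mirror X) = X"
  by (simp add: mirror_def rev_map)

lemma sorted_mirror: "sorted X \<Longrightarrow> sorted (mirror X)"
  by (simp add: mirror_def sorted_wrt_rev sorted_wrt_map)

lemma sorted_wrt_less_mirror: "sorted_wrt (<) X \<Longrightarrow> sorted_wrt (<) (mirror X)"
  by (simp add: mirror_def sorted_wrt_rev sorted_wrt_map)

lemma mem_mirror_iff: "x \<in> set (mirror X) \<longleftrightarrow> - x \<in> set X"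
  by (force simp: mirror_def)

lemma mirror_update: "p < length Y \<Longrightarrow> mirror (Y[p := r]) = (mirror Y)[length Y - Suc p := - r]"
  by (simp add: mirror_def map_update rev_update)

lemma sort_mirror: "sort (mirror X) = mirror (sort X)"
  by (rule properties_for_sort) (simp_all add: mirror_def sorted_mirror[unfolded mirror_def])

lemma sort_update_mirror:
  "p < length Y \<Longrightarrow> sort (Y[p := r]) = mirror (sort ((mirror Y)[length Y - Suc p := - r]))"
  by (metis mirror_mirror mirror_update sort_mirror)

lemma move_cost_mirror:
  assumes "length B = length A"
  shows "move_cost (mirror A) (mirror B) = move_cost A B"
proof -
  have "move_cost (mirror A) (mirror B) = (\<Sum>j<length A. (\<lambda>j. \<bar>A ! j - B ! j\<bar>) (length A - Suc j))"
    unfolding move_cost_def using assms by (intro sum.cong) (auto simp: nth_mirror abs_minus_commute)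
  also have "\<dots> = move_cost A B"
    unfolding move_cost_def by (rule sum.nat_diff_reindex)
  finally show ?thesis .
qed

definition num_below :: "real \<Rightarrow> real list \<Rightarrow> nat" where
  "num_below r X = length (takeWhile (\<lambda>v. v < r) X)"

lemma num_below_le_length: "num_below r X \<le> length X"
  by (simp add: num_below_def length_takeWhile_le)

lemma sorted_nth_less_iff:
  assumes "sorted X" "m < length X"
  shows "X ! m < r \<longleftrightarrow> m < num_below r X"
proof
  assume less: "X ! m < r"
  show "m < num_below r X"
  proof (rule ccontr)
    assume "\<not> m < num_below r X"
    then have "X ! num_below r X \<le> X ! m" "num_below r X < length X"
      using assms by (auto intro: sorted_nth_mono)
    moreover have "num_below r X < length X \<Longrightarrow> \<not> X ! num_below r X < r"
      unfolding num_below_def by (rule nth_length_takeWhile)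
    ultimately show False using less by simp
  qed
next
  assume "m < num_below r X"
  then show "X ! m < r"
    unfolding num_below_def by (metis nth_mem set_takeWhileD takeWhile_nth)
qed

lemma sort_update_right:
  assumes "sorted Y" "p < num_below r Y"
  shows "sort (Y[p := r]) =
    take p Y @ drop (Suc p) (take (num_below r Y) Y) @ r # drop (num_below r Y) Y"
proof (rule properties_for_sort)
  define n where "n = num_below r Y"
  have n: "p < n" "n \<le> length Y" using assms num_below_le_length unfolding n_def by auto
  have split: "drop (Suc p) Y = drop (Suc p) (take n Y) @ drop n Y"
    using n by (metis Suc_leI append_take_drop_id drop_append length_take min_absorb2 diff_is_0_eq drop0)
  have Y: "Y = take p Y @ Y ! p # drop (Suc p) (take n Y) @ drop n Y"
    using n split id_take_nth_drop[of p Y] by simp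
  have "Y[p := r] = take p Y @ r # drop (Suc p) (take n Y) @ drop n Y"
    using n split upd_conv_take_nth_drop[of p Y r] by simp
  then show "mset (take p Y @ drop (Suc p) (take n Y) @ r # drop n Y) = mset (Y[p := r])"
    by simp
  have "Y ! p < r" using assms sorted_nth_less_iff n unfolding n_def by auto
  moreover have "\<forall>x\<in>set (drop (Suc p) (take n Y)). x < r"
    using n by (auto simp: n_def num_below_def dest!: in_set_dropD
        simp flip: takeWhile_eq_take dest: set_takeWhileD)
  moreover have "\<forall>x\<in>set (drop n Y). r \<le> x"
    using assms(1) sorted_nth_less_iff[OF assms(1)] unfolding n_def
    by (auto simp: in_set_conv_nth not_less[symmetric])
  moreover have "sorted (take p Y @ Y ! p # drop (Suc p) (take n Y) @ drop n Y)"
    using assms(1) Y by metis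
  ultimately show "sorted (take p Y @ drop (Suc p) (take n Y) @ r # drop n Y)"
    by (fastforce simp: sorted_append)
qed

lemma nth_sort_update_right:
  assumes "sorted Y" "p < num_below r Y" "j < length Y"
  shows "sort (Y[p := r]) ! j =
    (if j < p then Y ! j else if Suc j < num_below r Y then Y ! Suc j
     else if Suc j = num_below r Y then r else Y ! j)"
  using assms num_below_le_length[of r Y]
  by (auto simp: sort_update_right nth_append min_def not_less le_Suc_eq)

lemma sort_update_right_disp:
  assumes "sorted Y" "p < num_below r Y" "j < length Y"
  shows "sort (Y[p := r]) ! j - Y ! j =
    (if p \<le> j \<and> Suc j < num_below r Y then Y ! Suc j - Y ! j
     else if Suc j = num_below r Y then r - Y ! j else 0)"
  using assms by (auto simp: nth_sort_update_right)

lemma sort_update_right_disp_nonneg: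
  assumes "sorted Y" "p < num_below r Y" "j < length Y"
  shows "Y ! j \<le> sort (Y[p := r]) ! j"
proof -
  have "Y ! j \<le> Y ! Suc j" if "Suc j < num_below r Y"
    using that assms num_below_le_length[of r Y] by (intro sorted_nth_mono) auto
  moreover have "Y ! j < r" if "Suc j = num_below r Y"
    using that assms sorted_nth_less_iff by simp
  ultimately show ?thesis
    using sort_update_right_disp[OF assms] by (auto split: if_splits)
qed

lemma sort_update_right_le:
  assumes "sorted Y" "p < num_below r Y" "j < num_below r Y"
  shows "sort (Y[p := r]) ! j \<le> r"
proof -
  have "j < length Y" using assms num_below_le_length[of r Y] by simp
  then show ?thesis
    using assms sorted_nth_less_iff[OF assms(1)] num_below_le_length[of r Y]
    by (auto simp: nth_sort_update_right intro: less_imp_le)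
qed

lemma sort_update_right_ge:
  assumes "sorted Y" "p < num_below r Y" "num_below r Y \<le> Suc j" "j < length Y"
  shows "r \<le> sort (Y[p := r]) ! j"
  using assms sorted_nth_less_iff[OF assms(1), of j r]
  by (auto simp: nth_sort_update_right)

lemma sum_sort_update_right_disp:
  assumes "sorted Y" "p \<le> a" "a < num_below r Y"
  shows "(\<Sum>j<length Y. if a \<le> j \<and> j < num_below r Y then sort (Y[p := r]) ! j - Y ! j else 0)
    = r - Y ! a"
proof (rule sum_lessThan_telescope[of a "num_below r Y - 1"])
  fix j assume j: "j < length Y"
  have p: "p < num_below r Y" using assms by simp
  show "(if a \<le> j \<and> j < num_below r Y then sort (Y[p := r]) ! j - Y ! j else 0)
      = (if a \<le> j \<and> j < num_below r Y - 1 then Y ! Suc j - Y ! j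
         else if j = num_below r Y - 1 then r - Y ! (num_below r Y - 1) else 0)"
    using sort_update_right_disp[OF assms(1) p j] assms by auto
qed (use assms num_below_le_length[of r Y] in auto)

lemma move_cost_sort_update_right:
  assumes "sorted Y" "p < num_below r Y"
  shows "move_cost Y (sort (Y[p := r])) = r - Y ! p"
proof -
  have "move_cost Y (sort (Y[p := r]))
      = (\<Sum>j<length Y. if p \<le> j \<and> j < num_below r Y then sort (Y[p := r]) ! j - Y ! j else 0)"
    unfolding move_cost_def
    using sort_update_right_disp_nonneg[OF assms] sort_update_right_disp[OF assms] assms(2)
    by (intro sum.cong) auto
  then show ?thesis using sum_sort_update_right_disp[OF assms(1) order_refl assms(2)] by simp
qed

lemma move_cost_sort_update:
  assumes "sorted Y" "p < length Y"
  shows "move_cost Y (sort (Y[p := r])) = \<bar>Y ! p - r\<bar>"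
proof (cases "Y ! p" r rule: linorder_cases)
  case less
  then have "p < num_below r Y" using sorted_nth_less_iff[OF assms] by simp
  then show ?thesis using move_cost_sort_update_right[OF assms(1)] less by simp
next
  case equal
  then have "Y[p := r] = Y" by auto
  then show ?thesis using assms equal by (simp add: move_cost_def sorted_sort_id)
next
  case greater
  let ?W = "mirror Y" and ?p = "length Y - Suc p"
  have "?W ! ?p < - r" "?p < length Y"
    using assms greater by (simp_all add: nth_mirror Suc_diff_Suc)
  then have "move_cost ?W (sort (?W[?p := - r])) = - r - ?W ! ?p"
    using assms sorted_nth_less_iff[of ?W ?p "- r"]
    by (intro move_cost_sort_update_right) (simp_all add: sorted_mirror)
  moreover have "move_cost Y (sort (Y[p := r])) = move_cost ?W (sort (?W[?p := - r]))"
    using move_cost_mirror[of "sort (?W[?p := - r])" ?W] sort_update_mirror[OF assms(2), of r]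
    by simp
  ultimately show ?thesis using assms greater by (simp add: nth_mirror Suc_diff_Suc)
qed

lemma sort_update_ge:
  fixes Y :: "real list"
  assumes "sorted Y" "p \<le> j" "j < length Y" "r \<le> Y ! p"
  shows "r \<le> sort (Y[p := r]) ! j"
proof (cases "Y ! p = r")
  case True
  then have "Y[p := r] = Y" by auto
  then show ?thesis using assms sorted_nth_mono[OF assms(1-3)] by (simp add: sorted_sort_id)
next
  case False
  let ?W = "mirror Y" and ?p = "length Y - Suc p" and ?j = "length Y - Suc j"
  have sW: "sorted ?W" using assms by (simp add: sorted_mirror)
  have "?W ! ?p < - r" using assms False by (simp add: nth_mirror Suc_diff_Suc)
  then have p: "?p < num_below (- r) ?W"
    using sorted_nth_less_iff[OF sW] assms by simp
  have "sort (?W[?p := - r]) ! ?j \<le> - r"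
    by (rule sort_update_right_le[OF sW p]) (use assms p in linarith)
  then show ?thesis
    using sort_update_mirror[of p Y r] assms by (simp add: nth_mirror Suc_diff_Suc)
qed

section \<open>The algorithm\<close>

text \<open>The rightmost server left of \<open>r\<close> and its right neighbour travel \<open>d\<close> and \<open>\<lambda> d\<close> towards \<open>r\<close>
  until one of them reaches it; the test avoids dividing by \<open>\<lambda> = 0\<close>. Meaningful only if \<open>r\<close> is
  uncovered and has a server to its left, since otherwise \<open>num_below r X - 1\<close> truncates to 0.\<close>

definition approach :: "real \<Rightarrow> real list \<Rightarrow> real \<Rightarrow> real list" where
  "approach lam X r =
    (let i = num_below r X - 1 in
     if Suc i = length X then X[i := r]
     else
       let d = (if lam * (r - X ! i) \<le> X ! Suc i - r then r - X ! i else (X ! Suc i - r) / lam)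
       in X[i := X ! i + d, Suc i := X ! Suc i - lam * d])"

text \<open>A request left of the predicted server is served by reflecting
  the line, so that the predicted side is always the left one for \<^const>\<open>approach\<close>.\<close>

definition lambda_dc :: "real \<Rightarrow> mc_alg" where
  "lambda_dc lam X r p =
    (if r \<in> set X then X
     else if X ! (p - 1) < r then approach lam X r
     else mirror (approach lam (mirror X) (- r)))"

lemma length_approach [simp]: "length (approach lam X r) = length X"
  by (simp add: approach_def Let_def)

lemma length_lambda_dc [simp]: "length (lambda_dc lam X r p) = length X"
  by (simp add: lambda_dc_def)

lemma approach_distance:
  fixes lam dl dr :: real
  assumes "0 \<le> lam" "0 < dl" "0 < dr"
  defines "d \<equiv> if lam * dl \<le> dr then dl else dr / lam"
  shows "0 < d \<and> d \<le> dl \<and> lam * d \<le> dr \<and> (d = dl \<or> lam * d = dr)"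
proof (cases "lam * dl \<le> dr")
  case False
  then have "0 < lam" "dr / lam < dl"
    using assms by (auto simp: divide_less_eq mult.commute intro: ccontr)
  then show ?thesis using False assms by simp
qed (use assms in simp)

lemma approach_cases:
  assumes "sorted X" "length X = k" "1 \<le> k" "X ! 0 < r" "r \<notin> set X" "0 \<le> lam"
  obtains (right_end) "X ! (k - 1) < r" "approach lam X r = X[k - 1 := r]"
  | (between) i d where "Suc i < k" "X ! i < r" "r < X ! Suc i" "0 < d"
      "X ! i + d \<le> r" "r \<le> X ! Suc i - lam * d" "X ! i + d = r \<or> X ! Suc i - lam * d = r"
      "approach lam X r = X[i := X ! i + d, Suc i := X ! Suc i - lam * d]"
proof -
  define i where "i = num_below r X - 1"
  have n: "Suc i = num_below r X"
    using sorted_nth_less_iff[OF assms(1)] assms(2-4) unfolding i_def by simp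
  then have i: "i < k" "X ! i < r"
    using sorted_nth_less_iff[OF assms(1)] num_below_le_length[of r X] assms(2) by auto
  show ?thesis
  proof (cases "Suc i = k")
    case True
    have "approach lam X r = X[i := r]"
      unfolding approach_def Let_def i_def[symmetric] using True assms(2) by simp
    moreover have "i = k - 1" using True by simp
    ultimately show ?thesis using right_end i(2) by simp
  next
    case False
    then have si: "Suc i < k" using i by simp
    have "\<not> X ! Suc i < r" using sorted_nth_less_iff[OF assms(1)] si n assms(2) by simp
    moreover have "X ! Suc i \<noteq> r" using assms(2,5) si nth_mem[of "Suc i" X] by auto
    ultimately have r: "r < X ! Suc i" by simp
    define d where "d = (if lam * (r - X ! i) \<le> X ! Suc i - r then r - X ! i else (X ! Suc i - r) / lam)"
    have "0 < d \<and> d \<le> r - X ! i \<and> lam * d \<le> X ! Suc i - r \<and> (d = r - X ! i \<or> lam * d = X ! Suc i - r)"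
      unfolding d_def using approach_distance assms(6) i r by simp
    then have "0 < d" "X ! i + d \<le> r" "r \<le> X ! Suc i - lam * d" "X ! i + d = r \<or> X ! Suc i - lam * d = r"
      by auto
    moreover have "approach lam X r = X[i := X ! i + d, Suc i := X ! Suc i - lam * d]"
      unfolding approach_def Let_def i_def[symmetric] d_def using False assms(2) by simp
    ultimately show ?thesis using between[OF si i(2) r, of d] by blast
  qed
qed

lemma approach_valid:
  assumes "sorted X" "length X = k" "1 \<le> k" "X ! 0 < r" "r \<notin> set X" "0 \<le> lam"
  shows "sorted (approach lam X r) \<and> r \<in> set (approach lam X r)"
  using assms(1-6)
proof (cases rule: approach_cases)
  case right_end
  have "X ! (k - 1 - 1) \<le> X ! (k - 1)" using assms by (intro sorted_nth_mono) auto
  have "sorted (X[k - 1 := r])"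
    by (rule sorted_list_update) (use assms right_end \<open>X ! (k - 1 - 1) \<le> X ! (k - 1)\<close> in auto)
  then show ?thesis using right_end assms by (simp add: set_update_memI)
next
  case (between i d)
  have "sorted (X[i := X ! i + d, Suc i := X ! Suc i - lam * d])"
    using assms between by (intro sorted_list_update2) auto
  moreover have "X ! i + d \<in> set (X[i := X ! i + d, Suc i := X ! Suc i - lam * d])"
    "X ! Suc i - lam * d \<in> set (X[i := X ! i + d, Suc i := X ! Suc i - lam * d])"
    using between assms nth_mem[of i "X[i := X ! i + d, Suc i := X ! Suc i - lam * d]"]
      nth_mem[of "Suc i" "X[i := X ! i + d, Suc i := X ! Suc i - lam * d]"] by simp_all
  ultimately show ?thesis using between(7,8) by auto
qed

lemma lambda_dc_cases:
  assumes "length X = k" "1 \<le> p" "p \<le> k"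
  obtains (stay) "r \<in> set X" "lambda_dc lam X r p = X"
  | (approach) "r \<notin> set X" "X ! (p - 1) < r" "lambda_dc lam X r p = approach lam X r"
  | (reflect) "- r \<notin> set (mirror X)" "mirror X ! (Suc k - p - 1) < - r"
      "lambda_dc lam X r p = mirror (approach lam (mirror X) (- r))"
proof -
  have "mirror X ! (Suc k - p - 1) = - X ! (p - 1)"
    using assms by (simp add: nth_mirror Suc_diff_Suc)
  moreover have "r \<notin> set X \<Longrightarrow> X ! (p - 1) \<noteq> r"
    using assms nth_mem[of "p - 1" X] by auto
  ultimately show ?thesis
    using that by (cases "r \<in> set X"; cases "X ! (p - 1) < r") (auto simp: lambda_dc_def mem_mirror_iff)
qed

lemma lambda_dc_mirror:
  assumes "length X = k" "1 \<le> p" "p \<le> k"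
  shows "lambda_dc lam (mirror X) (- r) (Suc k - p) = mirror (lambda_dc lam X r p)"
  using assms
proof (cases rule: lambda_dc_cases[where lam = lam and r = r])
  case stay
  then show ?thesis by (simp add: lambda_dc_def mem_mirror_iff)
next
  case approach
  moreover have "mirror X ! (Suc k - p - 1) = - X ! (p - 1)"
    using assms by (simp add: nth_mirror Suc_diff_Suc)
  ultimately show ?thesis by (simp add: lambda_dc_def mem_mirror_iff)
next
  case reflect
  then show ?thesis by (simp add: lambda_dc_def mem_mirror_iff)
qed

lemma lambda_dc_valid:
  assumes "0 \<le> lam" "1 \<le> k" "valid_config k X" "1 \<le> p" "p \<le> k"
  shows "valid_config k (lambda_dc lam X r p) \<and> r \<in> set (lambda_dc lam X r p)"
proof -
  have X: "sorted X" "length X = k" using assms by (auto simp: valid_config_def)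
  have "X ! 0 \<le> X ! (p - 1)" "mirror X ! 0 \<le> mirror X ! (Suc k - p - 1)"
    using X assms by (auto intro!: sorted_nth_mono simp: sorted_mirror)
  note bounds = this
  from X(2) assms(4,5) show ?thesis
  proof (cases rule: lambda_dc_cases[where lam = lam and r = r])
    case approach
    then show ?thesis
      using approach_valid[OF X assms(2) _ _ assms(1)] bounds by (simp add: valid_config_def X)
  next
    case reflect
    then show ?thesis
      using approach_valid[of "mirror X" k "- r" lam] X assms bounds
      by (auto simp: valid_config_def sorted_mirror mem_mirror_iff)
  qed (simp add: valid_config_def X)
qed

lemma lambda_dc_serves: "0 \<le> lam \<Longrightarrow> 1 \<le> k \<Longrightarrow> serves k (lambda_dc lam)"
  unfolding serves_def using lambda_dc_valid by blast

section \<open>The potential\<close>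

definition dist_term :: "real \<Rightarrow> nat \<Rightarrow> real list \<Rightarrow> real list \<Rightarrow> real" where
  "dist_term mu k X Y = (\<Sum>j<k. dc_weight mu k j * \<bar>X ! j - Y ! j\<bar>)"

definition tilt_term :: "real \<Rightarrow> nat \<Rightarrow> real list \<Rightarrow> real" where
  "tilt_term mu k X = (\<Sum>j<k. dc_tilt mu k j * X ! j)"

definition potential :: "real \<Rightarrow> nat \<Rightarrow> real list \<Rightarrow> real list \<Rightarrow> real" where
  "potential mu k X Y = dist_term mu k X Y + tilt_term mu k X"

lemma potential_self: "potential mu k X X = tilt_term mu k X"
  by (simp add: potential_def dist_term_def)

lemma tilt_term_nonneg:
  assumes "0 \<le> mu" "sorted X" "length X = k"
  shows "0 \<le> tilt_term mu k X"
proof -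
  define f where "f j = geom_sum mu j * (X ! j - X ! (k - Suc j))" for j
  have "(\<Sum>j<k. geom_sum mu (k - Suc j) * X ! j) = (\<Sum>j<k. geom_sum mu j * X ! (k - Suc j))"
    using sum.nat_diff_reindex[of "\<lambda>j. geom_sum mu (k - Suc j) * X ! j" k]
    by (simp add: Suc_diff_Suc)
  then have "tilt_term mu k X = (\<Sum>j<k. f j)"
    by (simp add: tilt_term_def dc_tilt_def f_def algebra_simps sum_subtractf)
  moreover have "(\<Sum>j<k. f (k - Suc j)) = (\<Sum>j<k. f j)" by (rule sum.nat_diff_reindex)
  ultimately have "2 * tilt_term mu k X = (\<Sum>j<k. f j + f (k - Suc j))"
    by (simp add: sum.distrib)
  also have "\<dots> = (\<Sum>j<k. (geom_sum mu j - geom_sum mu (k - Suc j)) * (X ! j - X ! (k - Suc j)))"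
    by (intro sum.cong) (auto simp: f_def Suc_diff_Suc algebra_simps)
  also have "\<dots> \<ge> 0"
  proof (intro sum_nonneg)
    fix j assume "j \<in> {..<k}"
    then show "0 \<le> (geom_sum mu j - geom_sum mu (k - Suc j)) * (X ! j - X ! (k - Suc j))"
      using assms geom_sum_mono[OF assms(1), of j "k - Suc j"] geom_sum_mono[OF assms(1), of "k - Suc j" j]
        sorted_nth_mono[OF assms(2), of j "k - Suc j"] sorted_nth_mono[OF assms(2), of "k - Suc j" j]
      by (cases "j \<le> k - Suc j") (auto intro: mult_nonpos_nonpos)
  qed
  finally show ?thesis by simp
qed

lemma potential_nonneg:
  assumes "0 \<le> mu" "sorted X" "length X = k"
  shows "0 \<le> potential mu k X Y"
proof -
  have "0 \<le> dist_term mu k X Y"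
    unfolding dist_term_def using assms(1) by (intro sum_nonneg mult_nonneg_nonneg dc_weight_nonneg) auto
  then show ?thesis using tilt_term_nonneg[OF assms] by (simp add: potential_def)
qed

lemma potential_mirror:
  assumes "length X = k" "length Y = k"
  shows "potential mu k (mirror X) (mirror Y) = potential mu k X Y"
proof -
  have "dist_term mu k (mirror X) (mirror Y) = dist_term mu k X Y"
  proof -
    have "dist_term mu k (mirror X) (mirror Y)
        = (\<Sum>j<k. (\<lambda>j. dc_weight mu k j * \<bar>X ! j - Y ! j\<bar>) (k - Suc j))"
      unfolding dist_term_def using assms
      by (intro sum.cong) (auto simp: nth_mirror dc_weight_mirror abs_minus_commute)
    also have "\<dots> = dist_term mu k X Y"
      unfolding dist_term_def by (rule sum.nat_diff_reindex)
    finally show ?thesis .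
  qed
  moreover have "tilt_term mu k (mirror X) = tilt_term mu k X"
  proof -
    have "tilt_term mu k (mirror X) = (\<Sum>j<k. (\<lambda>j. dc_tilt mu k j * X ! j) (k - Suc j))"
      unfolding tilt_term_def using assms
      by (intro sum.cong) (auto simp: nth_mirror dc_tilt_mirror)
    also have "\<dots> = tilt_term mu k X"
      unfolding tilt_term_def by (rule sum.nat_diff_reindex)
    finally show ?thesis .
  qed
  ultimately show ?thesis by (simp add: potential_def)
qed

lemma potential_le_move:
  assumes "length Y = k" "\<And>j. j < k \<Longrightarrow> 0 \<le> dc_weight mu k j \<and> dc_weight mu k j \<le> B"
  shows "potential mu k X D \<le> potential mu k X Y + B * move_cost Y D"
proof -
  have "dist_term mu k X D - dist_term mu k X Y
      = (\<Sum>j<k. dc_weight mu k j * (\<bar>X ! j - D ! j\<bar> - \<bar>X ! j - Y ! j\<bar>))"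
    by (simp add: dist_term_def sum_subtractf algebra_simps)
  also have "\<dots> \<le> (\<Sum>j<k. B * \<bar>Y ! j - D ! j\<bar>)"
  proof (rule sum_mono)
    fix j assume "j \<in> {..<k}"
    then have "0 \<le> dc_weight mu k j" "dc_weight mu k j \<le> B" using assms(2) by auto
    moreover have "\<bar>X ! j - D ! j\<bar> - \<bar>X ! j - Y ! j\<bar> \<le> \<bar>Y ! j - D ! j\<bar>" by linarith
    ultimately show "dc_weight mu k j * (\<bar>X ! j - D ! j\<bar> - \<bar>X ! j - Y ! j\<bar>) \<le> B * \<bar>Y ! j - D ! j\<bar>"
      by (meson abs_ge_zero mult_left_mono mult_right_mono order_trans)
  qed
  also have "\<dots> = B * move_cost Y D" using assms(1) by (simp add: move_cost_def sum_distrib_left)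
  finally show ?thesis by (simp add: potential_def)
qed

lemma move_cost_update:
  assumes "length X = k" "j < k"
  shows "move_cost X (X[j := v]) = \<bar>X ! j - v\<bar>"
  using sum_lessThan_update[OF assms(2), of "\<lambda>m. \<bar>X ! m - X[j := v] ! m\<bar>" "\<lambda>_. 0"] assms
  by (simp add: move_cost_def)

lemma move_cost_update2:
  assumes "length X = k" "Suc i < k"
  shows "move_cost X (X[i := u, Suc i := v]) = \<bar>X ! i - u\<bar> + \<bar>X ! Suc i - v\<bar>"
  using sum_lessThan_update2[OF assms(2), of "\<lambda>m. \<bar>X ! m - X[i := u, Suc i := v] ! m\<bar>" "\<lambda>_. 0"] assms
  by (simp add: move_cost_def)

lemma potential_update:
  assumes "length X = k" "j < k"
  shows "potential mu k (X[j := v]) Y = potential mu k X Y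
    + dc_weight mu k j * (\<bar>v - Y ! j\<bar> - \<bar>X ! j - Y ! j\<bar>) + dc_tilt mu k j * (v - X ! j)"
  using sum_lessThan_update[OF assms(2), of "\<lambda>m. dc_weight mu k m * \<bar>X[j := v] ! m - Y ! m\<bar>"
      "\<lambda>m. dc_weight mu k m * \<bar>X ! m - Y ! m\<bar>"]
    sum_lessThan_update[OF assms(2), of "\<lambda>m. dc_tilt mu k m * X[j := v] ! m" "\<lambda>m. dc_tilt mu k m * X ! m"]
    assms
  by (simp add: potential_def dist_term_def tilt_term_def algebra_simps)

lemma potential_update2:
  assumes "length X = k" "Suc i < k"
  shows "potential mu k (X[i := u, Suc i := v]) Y = potential mu k X Y
    + dc_weight mu k i * (\<bar>u - Y ! i\<bar> - \<bar>X ! i - Y ! i\<bar>) + dc_tilt mu k i * (u - X ! i)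
    + dc_weight mu k (Suc i) * (\<bar>v - Y ! Suc i\<bar> - \<bar>X ! Suc i - Y ! Suc i\<bar>)
    + dc_tilt mu k (Suc i) * (v - X ! Suc i)"
  using sum_lessThan_update2[OF assms(2), of "\<lambda>m. dc_weight mu k m * \<bar>X[i := u, Suc i := v] ! m - Y ! m\<bar>"
      "\<lambda>m. dc_weight mu k m * \<bar>X ! m - Y ! m\<bar>"]
    sum_lessThan_update2[OF assms(2), of "\<lambda>m. dc_tilt mu k m * X[i := u, Suc i := v] ! m"
      "\<lambda>m. dc_tilt mu k m * X ! m"]
    assms
  by (simp add: potential_def dist_term_def tilt_term_def algebra_simps)

lemma potential_right_end:
  assumes "length X = k" "1 \<le> k" "X ! (k - 1) < r" "r \<le> Y ! (k - 1)"
  shows "move_cost X (X[k - 1 := r]) + potential mu k (X[k - 1 := r]) Y \<le> potential mu k X Y"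
proof -
  have "\<bar>r - Y ! (k - 1)\<bar> - \<bar>X ! (k - 1) - Y ! (k - 1)\<bar> = - (r - X ! (k - 1))"
    using assms by auto
  then have "move_cost X (X[k - 1 := r]) + potential mu k (X[k - 1 := r]) Y
      = potential mu k X Y + (r - X ! (k - 1)) * (1 - dc_weight mu k (k - 1) + dc_tilt mu k (k - 1))"
    using assms move_cost_update[OF assms(1), of "k - 1" r] potential_update[OF assms(1), of "k - 1" mu r Y]
    by (simp add: algebra_simps)
  then show ?thesis using dc_weight_tilt_ends(2)[OF assms(2)] by simp
qed

lemma potential_gap:
  assumes "length X = k" "Suc i < k" "0 \<le> mu" "0 \<le> d1" "0 \<le> d2"
    "X ! i + d1 \<le> r" "r \<le> X ! Suc i - d2"
  defines "X' \<equiv> X[i := X ! i + d1, Suc i := X ! Suc i - d2]"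
  shows potential_gap_right: "r \<le> Y ! i \<Longrightarrow> move_cost X X' + potential mu k X' Y
      \<le> potential mu k X Y + 2 * (1 + geom_sum mu (k - 2 - i)) * (d2 - mu * d1)"
    and potential_gap_left: "Y ! Suc i \<le> r \<Longrightarrow> move_cost X X' + potential mu k X' Y
      \<le> potential mu k X Y + 2 * (1 + geom_sum mu i) * (d1 - mu * d2)"
proof -
  let ?a = "dc_weight mu k i" and ?a' = "dc_weight mu k (Suc i)"
  let ?w = "dc_tilt mu k i" and ?w' = "dc_tilt mu k (Suc i)"
  let ?A = "\<bar>X ! i + d1 - Y ! i\<bar> - \<bar>X ! i - Y ! i\<bar>"
  let ?B = "\<bar>X ! Suc i - d2 - Y ! Suc i\<bar> - \<bar>X ! Suc i - Y ! Suc i\<bar>"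
  have step: "move_cost X X' + potential mu k X' Y
      = potential mu k X Y + d1 + d2 + ?a * ?A + ?w * d1 + ?a' * ?B - ?w' * d2"
    using move_cost_update2[OF assms(1,2)] assms
    unfolding X'_def potential_update2[OF assms(1,2)] by (simp add: algebra_simps)
  have "?A \<le> d1" "?B \<le> d2" using assms(4,5) by linarith+
  then have A: "?a * ?A \<le> ?a * d1" and B: "?a' * ?B \<le> ?a' * d2"
    using dc_weight_nonneg[OF assms(3)] by (simp_all add: mult_left_mono)
  show "r \<le> Y ! i \<Longrightarrow> move_cost X X' + potential mu k X' Y
      \<le> potential mu k X Y + 2 * (1 + geom_sum mu (k - 2 - i)) * (d2 - mu * d1)"
  proof -
    assume "r \<le> Y ! i"
    then have "?a * ?A = - (?a * d1)" using assms by auto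
    then have "move_cost X X' + potential mu k X' Y
        \<le> potential mu k X Y + d1 + d2 - ?a * d1 + ?w * d1 + ?a' * d2 - ?w' * d2"
      using step B by linarith
    also have "\<dots> = potential mu k X Y + d1 * (1 - ?a + ?w) + d2 * (1 + ?a' - ?w')"
      by (simp add: algebra_simps)
    finally show ?thesis
      unfolding dc_weight_tilt_gap(1,2)[OF assms(2)] by (simp add: algebra_simps)
  qed
  show "Y ! Suc i \<le> r \<Longrightarrow> move_cost X X' + potential mu k X' Y
      \<le> potential mu k X Y + 2 * (1 + geom_sum mu i) * (d1 - mu * d2)"
  proof -
    assume "Y ! Suc i \<le> r"
    then have "?a' * ?B = - (?a' * d2)" using assms by auto
    then have "move_cost X X' + potential mu k X' Y
        \<le> potential mu k X Y + d1 + d2 + ?a * d1 + ?w * d1 - ?a' * d2 - ?w' * d2"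
      using step A by linarith
    also have "\<dots> = potential mu k X Y + d1 * (1 + ?a + ?w) + d2 * (1 - ?a' - ?w')"
      by (simp add: algebra_simps)
    finally show ?thesis
      unfolding dc_weight_tilt_gap(3,4)[OF assms(2)] by (simp add: algebra_simps)
  qed
qed

section \<open>Robustness\<close>

lemma approach_robust:
  assumes lam: "0 < lam" "lam \<le> 1"
    and X: "sorted X" "length X = k" "1 \<le> k" "X ! 0 < r" "r \<notin> set X"
    and D: "sorted D" "length D = k" "r \<in> set D"
  shows "move_cost X (approach lam X r) + potential (1 / lam) k (approach lam X r) D
    \<le> potential (1 / lam) k X D"
  using X less_imp_le[OF lam(1)]
proof (cases rule: approach_cases)
  case right_end
  then show ?thesis using potential_right_end[OF X(2,3)] sorted_mem_le_last[OF D(1,3)] D(2) by simp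
next
  case (between i d)
  have d: "0 \<le> d" "0 \<le> lam * d" using between lam by auto
  have mu: "0 \<le> 1 / lam" using lam by simp
  consider "r \<le> D ! i" | "D ! Suc i \<le> r" using sorted_mem_gap[OF D(1,3)] between(1) D(2) by blast
  then show ?thesis
  proof cases
    case 1
    have "lam * d \<le> 1 / lam * d"
      using lam d by (intro mult_right_mono) (auto simp: le_divide_eq mult_le_one)
    then have "2 * (1 + geom_sum (1 / lam) (k - 2 - i)) * (lam * d - 1 / lam * d) \<le> 0"
      using geom_sum_nonneg[OF mu] by (intro mult_nonneg_nonpos) auto
    then show ?thesis
      using potential_gap_right[OF X(2) between(1) mu d between(5,6) 1] between(8) by simp
  next
    case 2
    then show ?thesis
      using potential_gap_left[OF X(2) between(1) mu d between(5,6) 2] between(8) lam by simp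
  qed
qed

lemma lambda_dc_robust:
  assumes lam: "0 < lam" "lam \<le> 1" and "1 \<le> k" "valid_config k X" "valid_config k D" "r \<in> set D"
    and p: "1 \<le> p" "p \<le> k"
  shows "move_cost X (lambda_dc lam X r p) + potential (1 / lam) k (lambda_dc lam X r p) D
    \<le> potential (1 / lam) k X D"
proof -
  have X: "sorted X" "length X = k" and D: "sorted D" "length D = k"
    using assms by (auto simp: valid_config_def)
  have "X ! 0 \<le> X ! (p - 1)" "mirror X ! 0 \<le> mirror X ! (Suc k - p - 1)"
    using X p by (auto intro!: sorted_nth_mono simp: sorted_mirror)
  note bounds = this
  from X(2) p show ?thesis
  proof (cases rule: lambda_dc_cases[where lam = lam and r = r])
    case stay
    then show ?thesis by (simp add: move_cost_def)
  next
    case approach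
    then show ?thesis using approach_robust[OF lam X \<open>1 \<le> k\<close> _ _ D \<open>r \<in> set D\<close>] bounds by simp
  next
    case reflect
    let ?Z = "approach lam (mirror X) (- r)"
    have "move_cost (mirror X) ?Z + potential (1 / lam) k ?Z (mirror D)
        \<le> potential (1 / lam) k (mirror X) (mirror D)"
      using reflect bounds assms X D
      by (intro approach_robust) (auto simp: sorted_mirror mem_mirror_iff)
    moreover have "move_cost X (mirror ?Z) = move_cost (mirror X) ?Z"
      using move_cost_mirror[of ?Z "mirror X"] by simp
    moreover have "potential (1 / lam) k (mirror ?Z) D = potential (1 / lam) k ?Z (mirror D)"
      using potential_mirror[of ?Z k "mirror D"] X D by simp
    ultimately show ?thesis using reflect potential_mirror[OF X(2) D(2)] by simp
  qed
qed

lemma alg_cost_le_beta_path_cost: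
  assumes lam: "0 < lam" "lam \<le> 1" and k: "1 \<le> k"
  shows "valid_config k X \<Longrightarrow> valid_config k Y \<Longrightarrow> valid_prediction k rs ps \<Longrightarrow>
    length Ds = length rs \<Longrightarrow> \<forall>t<length rs. valid_config k (Ds ! t) \<and> rs ! t \<in> set (Ds ! t) \<Longrightarrow>
    alg_cost (lambda_dc lam) X rs ps \<le> beta lam k * path_cost Y Ds + potential (1 / lam) k X Y"
proof (induction rs arbitrary: X Y Ds ps)
  case Nil
  then show ?case
    using potential_nonneg[of "1 / lam" X k Y] lam by (simp add: valid_config_def)
next
  case (Cons r rs)
  obtain D Ds' where Ds: "Ds = D # Ds'" using Cons.prems(4) by (cases Ds) auto
  obtain p ps' where ps: "ps = p # ps'" "1 \<le> p" "p \<le> k" "valid_prediction k rs ps'"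
    using Cons.prems(3) by (cases ps) (auto simp: valid_prediction_def)
  let ?X' = "lambda_dc lam X r p"
  have D: "valid_config k D" "r \<in> set D" using Cons.prems(5) Ds by auto
  have "alg_cost (lambda_dc lam) ?X' rs ps' \<le> beta lam k * path_cost D Ds' + potential (1 / lam) k ?X' D"
    using Cons.prems Ds lambda_dc_valid[OF _ k Cons.prems(1) ps(2,3), of lam r] lam
    by (intro Cons.IH[OF _ D(1) ps(4)]) auto
  moreover have "move_cost X ?X' + potential (1 / lam) k ?X' D \<le> potential (1 / lam) k X D"
    by (rule lambda_dc_robust[OF lam k Cons.prems(1) D ps(2,3)])
  moreover have "potential (1 / lam) k X D \<le> potential (1 / lam) k X Y + beta lam k * move_cost Y D"
    using Cons.prems(2) dc_weight_le_beta[OF lam] dc_weight_nonneg[of "1 / lam"] lam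
    by (intro potential_le_move) (auto simp: valid_config_def)
  ultimately show ?case using ps(1) Ds by (simp add: algebra_simps)
qed

lemma alg_cost_le_beta_OPT:
  assumes lam: "0 < lam" "lam \<le> 1" and k: "1 \<le> k"
    and C: "valid_config k C" and ps: "valid_prediction k rs ps"
  shows "alg_cost (lambda_dc lam) C rs ps \<le> beta lam k * OPT k C rs + tilt_term (1 / lam) k C"
proof -
  let ?P = "{path_cost C Ds | Ds. length Ds = length rs \<and>
      (\<forall>t<length rs. valid_config k (Ds ! t) \<and> rs ! t \<in> set (Ds ! t))}"
  have "path_cost C (map (\<lambda>r. replicate k r) rs) \<in> ?P"
    using k by (auto simp: valid_config_def)
  then have ne: "?P \<noteq> {}" by blast
  have "(alg_cost (lambda_dc lam) C rs ps - tilt_term (1 / lam) k C) / beta lam k \<le> Inf ?P"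
  proof (rule cInf_greatest[OF ne])
    fix x assume "x \<in> ?P"
    then obtain Ds where Ds: "x = path_cost C Ds" "length Ds = length rs"
      "\<forall>t<length rs. valid_config k (Ds ! t) \<and> rs ! t \<in> set (Ds ! t)" by blast
    then have "alg_cost (lambda_dc lam) C rs ps - tilt_term (1 / lam) k C \<le> beta lam k * x"
      using alg_cost_le_beta_path_cost[OF lam k C C ps Ds(2,3)] by (simp add: potential_self)
    then show "(alg_cost (lambda_dc lam) C rs ps - tilt_term (1 / lam) k C) / beta lam k \<le> x"
      using beta_pos[OF lam(1) k] by (simp add: divide_le_eq mult.commute)
  qed
  then show ?thesis
    using beta_pos[OF lam(1) k] by (simp add: OPT_def divide_le_eq mult.commute)
qed

section \<open>Consistency\<close>

text \<open>When the servers \<open>i\<close> and \<open>i + 1\<close> close in on \<open>r\<close> by \<open>d\<close> and \<open>\<lambda> d\<close>, the movement cost plus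
  the change of the tilt term is \<open>gap_coeff \<lambda> k i * d + \<lambda> d a\<^sub>i\<^sub>+\<^sub>1\<close>, and the second summand is paid
  back by the distance term at server \<open>i + 1\<close>.\<close>

definition gap_coeff :: "real \<Rightarrow> nat \<Rightarrow> nat \<Rightarrow> real" where
  "gap_coeff lam k i =
    1 + lam - lam * dc_weight lam k (Suc i) + dc_tilt lam k i - lam * dc_tilt lam k (Suc i)"

lemma gap_coeff_bounds:
  assumes "0 \<le> lam" "Suc i < k"
  shows "gap_coeff lam k i \<le> dc_weight lam k i"
    and "gap_coeff lam k i + dc_weight lam k i \<le> 2 * (1 + geom_sum lam i)"
proof -
  have e: "k - 1 - Suc i = k - 2 - i" "k - 1 - i = Suc (k - 2 - i)" using assms(2) by auto
  have s: "0 \<le> lam * geom_sum lam (Suc i)" "0 \<le> geom_sum lam (k - 1 - i)"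
    using assms(1) geom_sum_nonneg by simp_all
  have "gap_coeff lam k i - dc_weight lam k i
      = - 2 * (lam * geom_sum lam (Suc i)) - 2 * geom_sum lam (k - 1 - i)"
    "gap_coeff lam k i + dc_weight lam k i = 2 + 2 * geom_sum lam i - 2 * (lam * geom_sum lam (Suc i))"
    unfolding gap_coeff_def dc_weight_def dc_tilt_def e by (simp_all add: algebra_simps)
  moreover have "2 * (1 + geom_sum lam i) = 2 + 2 * geom_sum lam i" by simp
  ultimately show "gap_coeff lam k i \<le> dc_weight lam k i"
    "gap_coeff lam k i + dc_weight lam k i \<le> 2 * (1 + geom_sum lam i)"
    using s by linarith+
qed

lemma abs_shift_bound:
  fixes z d s K a C :: real
  assumes "0 \<le> d" "z + d \<le> s" "0 \<le> s" "K \<le> a" "K + a \<le> C" "0 \<le> C"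
  shows "K * d + a * (\<bar>z + d\<bar> - \<bar>z\<bar>) \<le> C * s"
proof (cases "0 \<le> z")
  case True
  then have "K * d + a * (\<bar>z + d\<bar> - \<bar>z\<bar>) = (K + a) * d" using assms by (simp add: algebra_simps)
  also have "\<dots> \<le> C * d" using assms by (intro mult_right_mono)
  also have "\<dots> \<le> C * s" using assms True by (intro mult_left_mono) auto
  finally show ?thesis .
next
  case False
  show ?thesis
  proof (cases "z + d \<le> 0")
    case True
    then have "K * d + a * (\<bar>z + d\<bar> - \<bar>z\<bar>) = (K - a) * d" using False by (simp add: algebra_simps)
    also have "\<dots> \<le> 0" using assms by (intro mult_nonpos_nonneg) auto
    finally show ?thesis using assms by (meson mult_nonneg_nonneg order_trans)
  next
    case pos: False
    then have "K * d + a * (\<bar>z + d\<bar> - \<bar>z\<bar>) = (K + a) * (z + d) + (a - K) * z"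
      using False by (simp add: algebra_simps)
    also have "\<dots> \<le> C * (z + d) + 0"
    proof (rule add_mono)
      show "(K + a) * (z + d) \<le> C * (z + d)" using assms pos by (intro mult_right_mono) auto
      show "(a - K) * z \<le> 0" using assms False by (intro mult_nonneg_nonpos) auto
    qed
    also have "\<dots> \<le> C * s" using assms by (simp add: mult_left_mono)
    finally show ?thesis .
  qed
qed

lemma abs_move_bound:
  fixes x y y' a al c :: real
  assumes "y \<le> y'" "0 \<le> a" "a \<le> al" "c \<le> al + a" "b \<Longrightarrow> y' \<le> x"
  shows "a * (\<bar>x - y'\<bar> - \<bar>x - y\<bar>) \<le> al * (y' - y) - (if b then c * (y' - y) else 0)"
proof (cases b)
  case True
  then have e: "\<bar>x - y'\<bar> - \<bar>x - y\<bar> = - (y' - y)" using assms by auto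
  have "a * (\<bar>x - y'\<bar> - \<bar>x - y\<bar>) = - (a * (y' - y))" unfolding e by (rule mult_minus_right)
  moreover have "c * (y' - y) \<le> (al + a) * (y' - y)" using assms by (simp add: mult_right_mono)
  ultimately show ?thesis using True by (simp add: algebra_simps)
next
  case False
  have "\<bar>x - y'\<bar> - \<bar>x - y\<bar> \<le> y' - y" using assms(1) by linarith
  then have "a * (\<bar>x - y'\<bar> - \<bar>x - y\<bar>) \<le> a * (y' - y)" using assms(2) by (rule mult_left_mono)
  also have "\<dots> \<le> al * (y' - y)" using assms by (simp add: mult_right_mono)
  finally show ?thesis using False by simp
qed

lemma gap_term_bound:
  fixes x y y' r d K a C al :: real
  assumes "y \<le> y'" "y' \<le> r" "0 \<le> d" "x + d \<le> r" "K \<le> a" "K + a \<le> C" "0 \<le> C"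
    "0 \<le> a" "a \<le> al"
  shows "K * d + a * (\<bar>x + d - y'\<bar> - \<bar>x - y\<bar>) \<le> al * (y' - y) + C * (r - y')"
proof -
  have "\<bar>x + d - y'\<bar> - \<bar>x - y\<bar> \<le> (\<bar>(x - y') + d\<bar> - \<bar>x - y'\<bar>) + (y' - y)"
    using assms(1) by linarith
  then have "a * (\<bar>x + d - y'\<bar> - \<bar>x - y\<bar>) \<le> a * (\<bar>(x - y') + d\<bar> - \<bar>x - y'\<bar>) + a * (y' - y)"
    using assms(8) by (metis distrib_left mult_left_mono)
  moreover have "K * d + a * (\<bar>(x - y') + d\<bar> - \<bar>x - y'\<bar>) \<le> C * (r - y')"
    using assms by (intro abs_shift_bound) auto
  moreover have "a * (y' - y) \<le> al * (y' - y)" using assms by (intro mult_right_mono) auto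
  ultimately show ?thesis by linarith
qed

text \<open>A gap step of the algorithm at the servers \<open>i\<close> and \<open>i + 1\<close> while FtP moves its server
  \<open>p\<^sub>0 \<le> i\<close> right to \<open>r\<close>, past its server \<open>i + 1\<close>. After relabelling, the FtP servers
  \<open>p\<^sub>0, \<dots>, q\<close> take the positions of their successors and \<open>q\<close> takes \<open>r\<close>; the bound on the
  distance term is assembled index by index.\<close>

lemma dist_gap_ftp_left_term:
  assumes lam: "0 \<le> lam" "lam \<le> 1"
    and X: "sorted X" "length X = k" and Y: "sorted Y" "length Y = k"
    and i: "p0 \<le> i" "Suc i < num_below r Y"
    and d: "0 \<le> d" "X ! i + d \<le> r" "r \<le> X ! Suc i - lam * d"
    and j: "j < k"
  defines "X' \<equiv> X[i := X ! i + d, Suc i := X ! Suc i - lam * d]"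
    and "Y' \<equiv> sort (Y[p0 := r])" and "C \<equiv> 2 * (1 + geom_sum lam i)"
  shows "dc_weight lam k j * (\<bar>X' ! j - Y' ! j\<bar> - \<bar>X ! j - Y ! j\<bar>)
    \<le> alpha lam k * (Y' ! j - Y ! j)
      - (if Suc i \<le> j \<and> j < num_below r Y then C * (Y' ! j - Y ! j) else 0)
      + (if j = i then C * (r - Y ! Suc i) - gap_coeff lam k i * d
         else if j = Suc i then - (lam * dc_weight lam k (Suc i) * d) else 0)"
proof -
  let ?a = "dc_weight lam k j" and ?n = "num_below r Y"
  have n: "p0 < ?n" "Suc i < k" using i num_below_le_length[of r Y] Y(2) by auto
  have Y'_ge: "Y ! m \<le> Y' ! m" if "m < k" for m
    using sort_update_right_disp_nonneg[OF Y(1) n(1)] that Y(2) by (simp add: Y'_def)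
  have Y'_le: "Y' ! m \<le> r" if "m < ?n" for m
    using sort_update_right_le[OF Y(1) n(1) that] by (simp add: Y'_def)
  have C: "C \<le> alpha lam k + ?a" "0 \<le> ?a" "?a \<le> alpha lam k"
    using two_geom_sum_le_alpha_plus_weight[OF lam _ j, of i] dc_weight_nonneg[OF lam(1)]
      dc_weight_le_alpha[OF lam j] n by (auto simp: C_def)
  consider "j = i" | "j = Suc i" | "j \<noteq> i" "j \<noteq> Suc i" by blast
  then show ?thesis
  proof cases
    case 1
    have "Y ! Suc i < r" using sorted_nth_less_iff[OF Y(1)] i Y(2) n by simp
    moreover have "Y' ! i = Y ! Suc i"
      using nth_sort_update_right[OF Y(1) n(1)] i Y(2) n by (simp add: Y'_def)
    ultimately show ?thesis
      using gap_term_bound[of "Y ! i" "Y ! Suc i" r d "X ! i" "gap_coeff lam k i" ?a C "alpha lam k"]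
        gap_coeff_bounds[OF lam(1) n(2)] 1 d C geom_sum_nonneg[OF lam(1)] X(2) Y(2) n
        sorted_nth_mono[OF Y(1), of i "Suc i"]
      by (simp add: X'_def C_def)
  next
    case 2
    have "Y ! j \<le> Y' ! j" "Y' ! j \<le> r" "0 \<le> lam * d"
      using Y'_ge Y'_le n i 2 d lam by auto
    then have abs: "\<bar>X' ! j - Y' ! j\<bar> = X ! j - lam * d - Y' ! j" "\<bar>X ! j - Y ! j\<bar> = X ! j - Y ! j"
      using d n X(2) 2 by (simp_all add: X'_def)
    have "?a * (\<bar>X' ! j - Y' ! j\<bar> - \<bar>X ! j - Y ! j\<bar>) = - (lam * ?a * d) - ?a * (Y' ! j - Y ! j)"
      unfolding abs by (simp add: algebra_simps)
    moreover have "(C - alpha lam k - ?a) * (Y' ! j - Y ! j) \<le> 0"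
      using C Y'_ge[OF j] by (intro mult_nonpos_nonneg) auto
    ultimately show ?thesis using 2 n i by (simp add: algebra_simps)
  next
    case 3
    have "r \<le> X ! j" if "Suc i \<le> j"
      using sorted_nth_mono[OF X(1) that] j X(2) d mult_nonneg_nonneg[OF lam(1) d(1)] by linarith
    then have "Y' ! j \<le> X ! j" if "Suc i \<le> j \<and> j < ?n"
      using Y'_le that by fastforce
    then have "?a * (\<bar>X ! j - Y' ! j\<bar> - \<bar>X ! j - Y ! j\<bar>)
        \<le> alpha lam k * (Y' ! j - Y ! j) - (if Suc i \<le> j \<and> j < ?n then C * (Y' ! j - Y ! j) else 0)"
      using Y'_ge[OF j] C by (intro abs_move_bound) auto
    moreover have "X' ! j = X ! j" using 3 by (simp add: X'_def)
    ultimately show ?thesis using 3 by simp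
  qed
qed

lemma potential_gap_ftp_left:
  assumes lam: "0 \<le> lam" "lam \<le> 1"
    and X: "sorted X" "length X = k" and Y: "sorted Y" "length Y = k"
    and i: "p0 \<le> i" "Suc i < num_below r Y"
    and d: "0 \<le> d" "X ! i + d \<le> r" "r \<le> X ! Suc i - lam * d"
  shows "(1 + lam) * d + potential lam k (X[i := X ! i + d, Suc i := X ! Suc i - lam * d]) (sort (Y[p0 := r]))
    \<le> potential lam k X Y + alpha lam k * (r - Y ! p0)"
proof -
  define X' where "X' = X[i := X ! i + d, Suc i := X ! Suc i - lam * d]"
  define Y' where "Y' = sort (Y[p0 := r])"
  define C where "C = 2 * (1 + geom_sum lam i)"
  define l where "l j = Y' ! j - Y ! j" for j
  define E where "E j = (if j = i then C * (r - Y ! Suc i) - gap_coeff lam k i * d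
    else if j = Suc i then - (lam * dc_weight lam k (Suc i) * d) else 0)" for j
  have n: "p0 < num_below r Y" "Suc i < k" using i num_below_le_length[of r Y] Y(2) by auto
  have "dist_term lam k X' Y' - dist_term lam k X Y
      = (\<Sum>j<k. dc_weight lam k j * (\<bar>X' ! j - Y' ! j\<bar> - \<bar>X ! j - Y ! j\<bar>))"
    by (simp add: dist_term_def sum_subtractf algebra_simps)
  also have "\<dots> \<le> (\<Sum>j<k. alpha lam k * l j
      - (if Suc i \<le> j \<and> j < num_below r Y then C * l j else 0) + E j)"
  proof (rule sum_mono)
    fix j assume "j \<in> {..<k}"
    then have "j < k" by simp
    then show "dc_weight lam k j * (\<bar>X' ! j - Y' ! j\<bar> - \<bar>X ! j - Y ! j\<bar>)
        \<le> alpha lam k * l j - (if Suc i \<le> j \<and> j < num_below r Y then C * l j else 0) + E j"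
      unfolding X'_def Y'_def C_def l_def E_def by (rule dist_gap_ftp_left_term[OF assms])
  qed
  also have "\<dots> = alpha lam k * (\<Sum>j<k. l j)
      - (\<Sum>j<k. if Suc i \<le> j \<and> j < num_below r Y then C * l j else 0) + (\<Sum>j<k. E j)"
    by (simp only: sum.distrib sum_subtractf sum_distrib_left)
  also have "(\<Sum>j<k. l j) = r - Y ! p0"
    using move_cost_sort_update_right[OF Y(1) n(1)] sort_update_right_disp_nonneg[OF Y(1) n(1)] Y(2)
    by (simp add: move_cost_def l_def Y'_def abs_minus_commute)
  also have "(\<Sum>j<k. if Suc i \<le> j \<and> j < num_below r Y then C * l j else 0)
      = C * (\<Sum>j<k. if Suc i \<le> j \<and> j < num_below r Y then l j else 0)"
    unfolding sum_distrib_left by (rule sum.cong) simp_all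
  also have "(\<Sum>j<k. if Suc i \<le> j \<and> j < num_below r Y then l j else 0) = r - Y ! Suc i"
    unfolding l_def Y'_def using sum_sort_update_right_disp[OF Y(1) le_SucI[OF i(1)] i(2)] Y(2)
    by simp
  also have "(\<Sum>j<k. E j) = C * (r - Y ! Suc i) - gap_coeff lam k i * d - lam * dc_weight lam k (Suc i) * d"
    using sum_lessThan_update2[OF n(2), of E "\<lambda>_. 0"] by (simp add: E_def)
  finally have "dist_term lam k X' Y'
      \<le> dist_term lam k X Y + alpha lam k * (r - Y ! p0) - gap_coeff lam k i * d - lam * dc_weight lam k (Suc i) * d"
    by simp
  moreover have "tilt_term lam k X' = tilt_term lam k X + dc_tilt lam k i * d - dc_tilt lam k (Suc i) * (lam * d)"
    using sum_lessThan_update2[OF n(2), of "\<lambda>m. dc_tilt lam k m * X' ! m" "\<lambda>m. dc_tilt lam k m * X ! m"] X(2) n(2)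
    by (simp add: tilt_term_def X'_def algebra_simps)
  ultimately show ?thesis
    by (simp add: potential_def gap_coeff_def X'_def Y'_def algebra_simps)
qed

lemma potential_ftp_step:
  assumes "0 \<le> lam" "lam \<le> 1" "sorted Y" "length Y = k" "p0 < k"
  shows "potential lam k X (sort (Y[p0 := r])) \<le> potential lam k X Y + alpha lam k * \<bar>Y ! p0 - r\<bar>"
  using potential_le_move[of Y k lam "alpha lam k" X "sort (Y[p0 := r])"] assms
    dc_weight_nonneg dc_weight_le_alpha move_cost_sort_update[OF assms(3), of p0 r]
  by simp

lemma approach_consistent:
  assumes lam: "0 \<le> lam" "lam \<le> 1"
    and X: "sorted X" "length X = k" "1 \<le> k" "X ! p0 < r" "r \<notin> set X" and p0: "p0 < k"
    and Y: "sorted Y" "length Y = k"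
  shows "move_cost X (approach lam X r) + potential lam k (approach lam X r) (sort (Y[p0 := r]))
    \<le> potential lam k X Y + alpha lam k * \<bar>Y ! p0 - r\<bar>"
proof -
  let ?Y' = "sort (Y[p0 := r])"
  have ftp: "potential lam k X ?Y' \<le> potential lam k X Y + alpha lam k * \<bar>Y ! p0 - r\<bar>"
    by (rule potential_ftp_step[OF lam Y p0])
  have Y': "sorted ?Y'" "length ?Y' = k" "r \<in> set ?Y'" using Y p0 by (auto simp: set_update_memI)
  have x0: "X ! 0 < r" using sorted_nth_mono[OF X(1), of 0 p0] X p0 by simp
  from X(1-3) x0 X(5) lam(1) show ?thesis
  proof (cases rule: approach_cases)
    case right_end
    have "move_cost X (X[k - 1 := r]) + potential lam k (X[k - 1 := r]) ?Y' \<le> potential lam k X ?Y'"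
      by (rule potential_right_end[OF X(2,3) right_end(1)])
        (use sorted_mem_le_last[OF Y'(1,3)] Y'(2) in simp)
    then show ?thesis using right_end(2) ftp by simp
  next
    case (between i d)
    let ?X' = "X[i := X ! i + d, Suc i := X ! Suc i - lam * d]"
    have d: "0 \<le> d" "0 \<le> lam * d" using between lam by auto
    have i: "p0 \<le> i"
      using sorted_nth_mono[OF X(1), of "Suc i" p0] between X p0 by (cases "p0 \<le> i") auto
    show ?thesis
    proof (cases "r \<le> ?Y' ! i")
      case True
      then show ?thesis
        using potential_gap_right[OF X(2) between(1) lam(1) d between(5,6) True] between(8) ftp by simp
    next
      case False
      have "Y ! p0 < r"
        using sort_update_ge[OF Y(1) i, of r] between(1) Y(2) False by force
      then have p0n: "p0 < num_below r Y" using sorted_nth_less_iff[OF Y(1)] Y(2) p0 by simp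
      have "Suc i < num_below r Y"
        using sort_update_right_ge[OF Y(1) p0n, of i] between(1) Y(2) False by force
      then have "(1 + lam) * d + potential lam k ?X' ?Y' \<le> potential lam k X Y + alpha lam k * (r - Y ! p0)"
        using potential_gap_ftp_left[OF lam X(1,2) Y i _ d(1) between(5,6)] by simp
      moreover have "move_cost X ?X' = (1 + lam) * d"
        using move_cost_update2[OF X(2) between(1)] d by (simp add: algebra_simps)
      ultimately show ?thesis using between(8) \<open>Y ! p0 < r\<close> by simp
    qed
  qed
qed

lemma lambda_dc_consistent:
  assumes lam: "0 \<le> lam" "lam \<le> 1" and k: "1 \<le> k" and "valid_config k X" "valid_config k Y"
    and p: "1 \<le> p" "p \<le> k"
  shows "move_cost X (lambda_dc lam X r p) + potential lam k (lambda_dc lam X r p) (sort (Y[p - 1 := r]))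
    \<le> potential lam k X Y + alpha lam k * \<bar>Y ! (p - 1) - r\<bar>"
proof -
  have X: "sorted X" "length X = k" and Y: "sorted Y" "length Y = k"
    using assms by (auto simp: valid_config_def)
  have p': "p - 1 < k" "Suc k - p - 1 < k" using p by auto
  from X(2) p show ?thesis
  proof (cases rule: lambda_dc_cases[where lam = lam and r = r])
    case stay
    then show ?thesis using potential_ftp_step[OF lam Y p'(1)] by (simp add: move_cost_def)
  next
    case approach
    then show ?thesis using approach_consistent[OF lam X k _ _ p'(1) Y] by simp
  next
    case reflect
    let ?Z = "approach lam (mirror X) (- r)" and ?W' = "sort ((mirror Y)[Suc k - p - 1 := - r])"
    have "move_cost (mirror X) ?Z + potential lam k ?Z ?W'
        \<le> potential lam k (mirror X) (mirror Y) + alpha lam k * \<bar>mirror Y ! (Suc k - p - 1) - - r\<bar>"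
      using reflect X Y k p'
      by (intro approach_consistent[OF lam]) (auto simp: sorted_mirror)
    moreover have "sort (Y[p - 1 := r]) = mirror ?W'"
      using sort_update_mirror[of "p - 1" Y r] Y(2) p by (simp add: Suc_diff_Suc)
    moreover have "move_cost X (mirror ?Z) = move_cost (mirror X) ?Z"
      using move_cost_mirror[of ?Z "mirror X"] by simp
    moreover have "potential lam k (mirror ?Z) (mirror ?W') = potential lam k ?Z ?W'"
      using potential_mirror[of ?Z k ?W'] X Y by simp
    moreover have "mirror Y ! (Suc k - p - 1) = - Y ! (p - 1)"
      using Y(2) p by (simp add: nth_mirror Suc_diff_Suc)
    ultimately show ?thesis
      using reflect potential_mirror[OF X(2) Y(2)] by (simp add: abs_minus_commute)
  qed
qed

lemma alg_cost_le_alpha_ftp_cost: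
  assumes lam: "0 \<le> lam" "lam \<le> 1" and k: "1 \<le> k"
  shows "valid_config k X \<Longrightarrow> valid_config k Y \<Longrightarrow> valid_prediction k rs ps \<Longrightarrow>
    alg_cost (lambda_dc lam) X rs ps \<le> alpha lam k * ftp_cost Y rs ps + potential lam k X Y"
proof (induction rs arbitrary: X Y ps)
  case Nil
  then show ?case using potential_nonneg[of lam X k Y] lam by (simp add: valid_config_def)
next
  case (Cons r rs)
  obtain p ps' where ps: "ps = p # ps'" "1 \<le> p" "p \<le> k" "valid_prediction k rs ps'"
    using Cons.prems(3) by (cases ps) (auto simp: valid_prediction_def)
  let ?X' = "lambda_dc lam X r p" and ?Y' = "sort (Y[p - 1 := r])"
  have "alg_cost (lambda_dc lam) ?X' rs ps' \<le> alpha lam k * ftp_cost ?Y' rs ps' + potential lam k ?X' ?Y'"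
    using Cons.prems(2) lambda_dc_valid[OF lam(1) k Cons.prems(1) ps(2,3), of r]
    by (intro Cons.IH ps(4)) (auto simp: valid_config_def)
  moreover have "move_cost X ?X' + potential lam k ?X' ?Y' \<le> potential lam k X Y + alpha lam k * \<bar>Y ! (p - 1) - r\<bar>"
    by (rule lambda_dc_consistent[OF lam k Cons.prems(1,2) ps(2,3)])
  ultimately show ?case using ps(1) by (simp add: algebra_simps)
qed

section \<open>Erasability\<close>

lemma alg_final_reaching:
  assumes "wf R"
    and step: "\<And>X. Inv X \<Longrightarrow> \<not> Goal X \<Longrightarrow>
      \<exists>r\<in>P. \<exists>p. 1 \<le> p \<and> p \<le> k \<and> Inv (A X r p) \<and> (A X r p, X) \<in> R"
    and "Inv X"
  shows "\<exists>rs ps. set rs \<subseteq> P \<and> valid_prediction k rs ps \<and>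
    Inv (alg_final A X rs ps) \<and> Goal (alg_final A X rs ps)"
  using assms(3)
proof (induction X rule: wf_induct[OF assms(1)])
  case (1 X)
  show ?case
  proof (cases "Goal X")
    case True
    then show ?thesis using 1 by (intro exI[of _ "[]"]) (simp add: valid_prediction_def)
  next
    case False
    then obtain r p where "r \<in> P" "1 \<le> p" "p \<le> k" "Inv (A X r p)" "(A X r p, X) \<in> R"
      using step[OF "1.prems"] by blast
    moreover from this obtain rs ps where "set rs \<subseteq> P" "valid_prediction k rs ps"
      "Inv (alg_final A (A X r p) rs ps)" "Goal (alg_final A (A X r p) rs ps)"
      using "1.IH" by blast
    ultimately show ?thesis
      by (intro exI[of _ "r # rs"] exI[of _ "p # ps"]) (auto simp: valid_prediction_def)
  qed
qed

lemma lex_floor_less: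
  fixes M M' delta :: real
  assumes "0 < delta" "0 \<le> M'" "(M' \<le> M \<and> n' < n) \<or> M' \<le> M - delta"
  shows "((nat \<lfloor>M' / delta\<rfloor>, n'), (nat \<lfloor>M / delta\<rfloor>, n)) \<in> less_than <*lex*> less_than"
proof (cases "M' \<le> M - delta")
  case True
  then have "M' / delta \<le> M / delta - 1" using assms(1) by (simp add: field_simps)
  then have "\<lfloor>M' / delta\<rfloor> < \<lfloor>M / delta\<rfloor>" by linarith
  moreover have "0 \<le> \<lfloor>M' / delta\<rfloor>" using assms(1,2) by simp
  ultimately have "nat \<lfloor>M' / delta\<rfloor> < nat \<lfloor>M / delta\<rfloor>" by linarith
  then show ?thesis by simp
next
  case False
  with assms have "M' / delta \<le> M / delta" "n' < n" by (auto simp: divide_right_mono)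
  then have "nat \<lfloor>M' / delta\<rfloor> \<le> nat \<lfloor>M / delta\<rfloor>" by (intro nat_mono floor_mono)
  then show ?thesis
    using \<open>n' < n\<close> unfolding in_lex_prod by (metis le_neq_implies_less less_than_iff)
qed

text \<open>The
  weight \<open>2\<^sup>k\<^sup>-\<^sup>m\<close> of index \<open>m\<close> makes a step that helps server \<open>j\<close> but hurts server \<open>j + 1\<close>
  still pay off.\<close>

definition deficits :: "real list \<Rightarrow> real list \<Rightarrow> nat set" where
  "deficits Q X = {m. m < length Q \<and> X ! m < Q ! m}"

definition deficit_rank :: "real list \<Rightarrow> real list \<Rightarrow> nat" where
  "deficit_rank Q X = (\<Sum>m\<in>deficits Q X. 2 ^ (length Q - m))"

definition weighted_dist :: "real list \<Rightarrow> real list \<Rightarrow> real" where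
  "weighted_dist Q X = (\<Sum>m<length Q. 2 ^ (length Q - m) * \<bar>X ! m - Q ! m\<bar>)"

lemma finite_deficits [simp]: "finite (deficits Q X)"
  by (simp add: deficits_def)

lemma weighted_dist_nonneg: "0 \<le> weighted_dist Q X"
  unfolding weighted_dist_def by (intro sum_nonneg) auto

lemma deficit_rank_less:
  assumes "j \<in> deficits Q X" "Suc j \<notin> deficits Q X"
    and "deficits Q X' \<subseteq> insert (Suc j) (deficits Q X - {j})"
  shows "deficit_rank Q X' < deficit_rank Q X"
proof -
  have "deficit_rank Q X' \<le> (\<Sum>m\<in>insert (Suc j) (deficits Q X - {j}). 2 ^ (length Q - m))"
    unfolding deficit_rank_def by (rule sum_mono2) (use assms(3) in auto)
  also have "\<dots> = 2 ^ (length Q - Suc j) + (\<Sum>m\<in>deficits Q X - {j}. 2 ^ (length Q - m))"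
    using assms(2) by simp
  also have "\<dots> < 2 ^ (length Q - j) + (\<Sum>m\<in>deficits Q X - {j}. 2 ^ (length Q - m))"
    using assms(1) by (auto simp: deficits_def)
  also have "\<dots> = deficit_rank Q X"
    unfolding deficit_rank_def
    using sum.remove[OF finite_deficits assms(1), of "\<lambda>m. 2 ^ (length Q - m) :: nat"] by simp
  finally show ?thesis .
qed

lemma weighted_dist_between:
  assumes "length Q = k" "length X = k" "Suc j < k" "0 \<le> d" "0 \<le> lam" "lam \<le> 1"
    "X ! j + d \<le> Q ! j" "Q ! Suc j \<le> X ! Suc j"
  shows "weighted_dist Q (X[j := X ! j + d, Suc j := X ! Suc j - lam * d])
    \<le> weighted_dist Q X - 2 ^ (k - Suc j) * d"
proof -
  let ?X' = "X[j := X ! j + d, Suc j := X ! Suc j - lam * d]"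
  have "0 \<le> lam * d" "lam * d \<le> d" using assms by (simp_all add: mult_left_le_one_le)
  then have "\<bar>X ! Suc j - lam * d - Q ! Suc j\<bar> - \<bar>X ! Suc j - Q ! Suc j\<bar> \<le> d"
    by linarith
  then have "2 ^ (k - Suc j) * (\<bar>X ! Suc j - lam * d - Q ! Suc j\<bar> - \<bar>X ! Suc j - Q ! Suc j\<bar>)
      \<le> 2 ^ (k - Suc j) * d" by (intro mult_left_mono) auto
  moreover have "(2::real) ^ (k - j) = 2 * 2 ^ (k - Suc j)"
    using assms(3) by (simp flip: power_Suc add: Suc_diff_Suc)
  moreover have "weighted_dist Q ?X' = weighted_dist Q X - 2 ^ (k - j) * d
      + 2 ^ (k - Suc j) * (\<bar>X ! Suc j - lam * d - Q ! Suc j\<bar> - \<bar>X ! Suc j - Q ! Suc j\<bar>)"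
    using sum_lessThan_update2[OF assms(3), of "\<lambda>m. 2 ^ (k - m) * \<bar>?X' ! m - Q ! m\<bar>"
      "\<lambda>m. 2 ^ (k - m) * \<bar>X ! m - Q ! m\<bar>"] assms
    by (simp add: weighted_dist_def algebra_simps)
  ultimately show ?thesis by (simp add: algebra_simps)
qed

lemma max_deficit_bounds:
  assumes "length Q = k" "sorted_wrt (<) Q" "sorted X" "length X = k"
    and "j = Max (deficits Q X)" "deficits Q X \<noteq> {}"
  shows "j < k" "\<And>m. m \<le> j \<Longrightarrow> X ! m < Q ! j"
    "\<And>m. j < m \<Longrightarrow> m < k \<Longrightarrow> Q ! m \<le> X ! m" "\<And>m. j < m \<Longrightarrow> m < k \<Longrightarrow> Q ! j < X ! m"
proof -
  have j: "j \<in> deficits Q X" using assms(5,6) Max_in[OF finite_deficits] by blast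
  then show "j < k" using assms(1) by (simp add: deficits_def)
  show above: "Q ! m \<le> X ! m" if "j < m" "m < k" for m
  proof -
    have "m \<notin> deficits Q X"
    proof
      assume "m \<in> deficits Q X"
      then have "m \<le> j" using assms(5) by simp
      then show False using that by simp
    qed
    then show ?thesis using that assms(1) by (simp add: deficits_def not_less)
  qed
  show "X ! m < Q ! j" if "m \<le> j" for m
    using j that sorted_nth_mono[OF assms(3) that] assms(1,4) by (auto simp: deficits_def)
  show "Q ! j < X ! m" if "j < m" "m < k" for m
    using above[OF that] that assms(1,2) by (fastforce simp: sorted_wrt_iff_nth_less)
qed

lemma raise_right_end_progress:
  assumes "length Q = k" "length X = k" "j < k" "j \<in> deficits Q X" "Suc j \<notin> deficits Q X"
  defines "X' \<equiv> X[j := Q ! j]"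
  shows "weighted_dist Q X' \<le> weighted_dist Q X \<and> deficit_rank Q X' < deficit_rank Q X"
proof
  have "weighted_dist Q X' = weighted_dist Q X
      + (2 ^ (k - j) * \<bar>X' ! j - Q ! j\<bar> - 2 ^ (k - j) * \<bar>X ! j - Q ! j\<bar>)"
    unfolding weighted_dist_def assms(1) X'_def
    by (rule sum_lessThan_update) (use assms(2,3) in auto)
  then show "weighted_dist Q X' \<le> weighted_dist Q X" using assms(2,3) by (simp add: X'_def)
  have "deficits Q X' \<subseteq> insert (Suc j) (deficits Q X - {j})"
    using assms(1-3) unfolding X'_def by (auto simp: deficits_def nth_list_update)
  then show "deficit_rank Q X' < deficit_rank Q X" by (rule deficit_rank_less[OF assms(4,5)])
qed

lemma raise_between_progress:
  assumes "length Q = k" "length X = k" "Suc j < k" "j \<in> deficits Q X" "Suc j \<notin> deficits Q X"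
    "0 \<le> d" "0 \<le> lam" "lam \<le> 1" "X ! j + d \<le> Q ! j" "X ! j + d = Q ! j \<or> X ! Suc j - lam * d = Q ! j"
    "delta \<le> Q ! Suc j - Q ! j"
  defines "X' \<equiv> X[j := X ! j + d, Suc j := X ! Suc j - lam * d]"
  shows "(weighted_dist Q X' \<le> weighted_dist Q X \<and> deficit_rank Q X' < deficit_rank Q X)
    \<or> weighted_dist Q X' \<le> weighted_dist Q X - delta"
proof -
  have "Q ! Suc j \<le> X ! Suc j" using assms(1,3,5) by (simp add: deficits_def)
  then have W: "weighted_dist Q X' \<le> weighted_dist Q X - 2 ^ (k - Suc j) * d"
    unfolding X'_def using assms by (intro weighted_dist_between) auto
  show ?thesis
  proof (cases "X ! j + d = Q ! j")
    case True
    have "deficits Q X' \<subseteq> insert (Suc j) (deficits Q X - {j})"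
      using assms(1-3) True unfolding X'_def
      by (auto simp: deficits_def nth_list_update split: if_splits)
    moreover have "0 \<le> 2 ^ (k - Suc j) * d" using assms by simp
    ultimately show ?thesis using deficit_rank_less[OF assms(4,5)] W by auto
  next
    case False
    then have "delta \<le> lam * d"
      using assms(10,11) \<open>Q ! Suc j \<le> X ! Suc j\<close> by simp
    also have "\<dots> \<le> 2 ^ (k - Suc j) * d"
      using assms(6-8) by (intro mult_right_mono) (auto intro: order_trans[OF _ one_le_power])
    finally show ?thesis using W by simp
  qed
qed

lemma lambda_dc_raise_step:
  assumes Q: "length Q = k" "sorted_wrt (<) Q" and gap: "\<And>m. Suc m < k \<Longrightarrow> delta \<le> Q ! Suc m - Q ! m"
    and lam: "0 \<le> lam" "lam \<le> 1" and X: "sorted X" "length X = k" and "deficits Q X \<noteq> {}"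
  defines "j \<equiv> Max (deficits Q X)"
  defines "X' \<equiv> lambda_dc lam X (Q ! j) (Suc j)"
  shows "((weighted_dist Q X' \<le> weighted_dist Q X \<and> deficit_rank Q X' < deficit_rank Q X)
      \<or> weighted_dist Q X' \<le> weighted_dist Q X - delta)
    \<and> ((\<forall>m<k. X ! m \<le> Q ! m) \<longrightarrow> (\<forall>m<k. X' ! m \<le> Q ! m))"
proof -
  note bounds = max_deficit_bounds[OF Q X meta_eq_to_obj_eq[OF j_def] \<open>deficits Q X \<noteq> {}\<close>]
  let ?r = "Q ! j"
  have jD: "j \<in> deficits Q X" "Suc j \<notin> deficits Q X"
    using bounds(1,2) bounds(3)[of "Suc j"] Q(1) by (auto simp: deficits_def not_less_eq)
  have "?r \<notin> set X"
  proof
    assume "?r \<in> set X"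
    then obtain m where "m < k" "X ! m = ?r" using X(2) by (auto simp: in_set_conv_nth)
    then show False using bounds(2)[of m] bounds(4)[of m] by (cases "m \<le> j") auto
  qed
  then have X': "X' = approach lam X ?r" using bounds by (simp add: X'_def lambda_dc_def)
  have "1 \<le> k" "X ! 0 < ?r" using bounds(1) bounds(2)[of 0] by simp_all
  from X this \<open>?r \<notin> set X\<close> lam(1) show ?thesis
  proof (cases rule: approach_cases)
    case right_end
    have jk: "j = k - 1" using bounds(1) bounds(4)[of "k - 1"] right_end(1) by fastforce
    have X'_eq: "X' = X[j := ?r]" using X' right_end(2) jk by simp
    have "\<forall>m<k. X ! m \<le> Q ! m \<Longrightarrow> \<forall>m<k. X' ! m \<le> Q ! m"
      unfolding X'_eq using X(2) bounds(1) by (auto simp: nth_list_update)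
    then show ?thesis
      using raise_right_end_progress[OF Q(1) X(2) bounds(1) jD] unfolding X'_eq by blast
  next
    case (between i d)
    have "\<not> j < i" using bounds(4)[of i] between(1,2) by auto
    moreover have "\<not> Suc i \<le> j" using bounds(2)[of "Suc i"] between(3) by auto
    ultimately have ij: "i = j" by simp
    have X'_eq: "X' = X[j := X ! j + d, Suc j := X ! Suc j - lam * d]" using X' between(8) ij by simp
    have "\<forall>m<k. X' ! m \<le> Q ! m" if below_Q: "\<forall>m<k. X ! m \<le> Q ! m"
    proof (intro allI impI)
      fix m assume "m < k"
      have "X ! j + d \<le> Q ! j" "0 \<le> lam * d" "X ! Suc j \<le> Q ! Suc j"
        using between ij lam below_Q by auto
      then show "X' ! m \<le> Q ! m"
        using below_Q \<open>m < k\<close> between(1) ij X(2) unfolding X'_eq by (auto simp: nth_list_update)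
    qed
    moreover have "delta \<le> Q ! Suc j - Q ! j" using gap between(1) ij by simp
    ultimately show ?thesis
      using raise_between_progress[OF Q(1) X(2) _ jD _ lam] between ij unfolding X'_eq by auto
  qed
qed

lemma lambda_dc_reach_above:
  assumes Q: "length Q = k" "sorted_wrt (<) Q" and lam: "0 \<le> lam" "lam \<le> 1"
    and X: "valid_config k X"
  shows "\<exists>rs ps. set rs \<subseteq> set Q \<and> valid_prediction k rs ps \<and>
    valid_config k (alg_final (lambda_dc lam) X rs ps) \<and>
    (\<forall>m<k. Q ! m \<le> alg_final (lambda_dc lam) X rs ps ! m) \<and>
    ((\<forall>m<k. X ! m \<le> Q ! m) \<longrightarrow> (\<forall>m<k. alg_final (lambda_dc lam) X rs ps ! m \<le> Q ! m))"
proof -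
  define delta where "delta = Min (insert 1 ((\<lambda>m. Q ! Suc m - Q ! m) ` {m. Suc m < k}))"
  have "finite {m. Suc m < k}" by (rule finite_subset[of _ "{..<k}"]) auto
  then have fin: "finite (insert 1 ((\<lambda>m. Q ! Suc m - Q ! m) ` {m. Suc m < k}))" by simp
  have delta: "0 < delta" "\<And>m. Suc m < k \<Longrightarrow> delta \<le> Q ! Suc m - Q ! m"
    using Q fin by (auto simp: delta_def sorted_wrt_iff_nth_less)
  define Inv where "Inv Z \<longleftrightarrow> valid_config k Z \<and> ((\<forall>m<k. X ! m \<le> Q ! m) \<longrightarrow> (\<forall>m<k. Z ! m \<le> Q ! m))"
    for Z
  let ?R = "inv_image (less_than <*lex*> less_than)
    (\<lambda>Z. (nat \<lfloor>weighted_dist Q Z / delta\<rfloor>, deficit_rank Q Z))"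
  have "\<exists>rs ps. set rs \<subseteq> set Q \<and> valid_prediction k rs ps \<and> Inv (alg_final (lambda_dc lam) X rs ps)
      \<and> (\<forall>m<k. Q ! m \<le> alg_final (lambda_dc lam) X rs ps ! m)"
  proof (rule alg_final_reaching[where R = ?R])
    fix Z assume Z: "Inv Z" "\<not> (\<forall>m<k. Q ! m \<le> Z ! m)"
    then have sZ: "sorted Z" "length Z = k" and ne: "deficits Q Z \<noteq> {}"
      using Q(1) by (auto simp: Inv_def valid_config_def deficits_def not_le)
    define j where "j = Max (deficits Q Z)"
    have j: "j < k" using max_deficit_bounds[OF Q sZ j_def ne] by simp
    then have k: "1 \<le> k" by simp
    note step = lambda_dc_raise_step[OF Q delta(2) lam sZ ne, folded j_def]
    have "Inv (lambda_dc lam Z (Q ! j) (Suc j))"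
      using step lambda_dc_valid[OF lam(1) k _, of Z "Suc j" "Q ! j"] Z(1) j
      by (auto simp: Inv_def)
    moreover have "(lambda_dc lam Z (Q ! j) (Suc j), Z) \<in> ?R"
      using lex_floor_less[OF delta(1) weighted_dist_nonneg] step by simp
    ultimately show "\<exists>r\<in>set Q. \<exists>p. 1 \<le> p \<and> p \<le> k \<and> Inv (lambda_dc lam Z r p) \<and> (lambda_dc lam Z r p, Z) \<in> ?R"
      using j Q(1) by (intro bexI[of _ "Q ! j"] exI[of _ "Suc j"]) auto
  qed (use X in \<open>auto simp: Inv_def\<close>)
  then show ?thesis unfolding Inv_def by blast
qed

lemma alg_final_lambda_dc_mirror:
  "length X = k \<Longrightarrow> valid_prediction k rs ps \<Longrightarrow>
    alg_final (lambda_dc lam) (mirror X) (map uminus rs) (map (\<lambda>p. Suc k - p) ps)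
    = mirror (alg_final (lambda_dc lam) X rs ps)"
proof (induction rs arbitrary: X ps)
  case (Cons r rs)
  then obtain p ps' where "ps = p # ps'" "1 \<le> p" "p \<le> k" "valid_prediction k rs ps'"
    by (cases ps) (auto simp: valid_prediction_def)
  then show ?case using Cons lambda_dc_mirror[OF Cons.prems(1)] by simp
qed simp

lemma alg_final_append:
  "length rs = length ps \<Longrightarrow>
    alg_final A C (rs @ rs') (ps @ ps') = alg_final A (alg_final A C rs ps) rs' ps'"
proof (induction rs arbitrary: C ps)
  case (Cons r rs)
  then show ?case by (cases ps) auto
qed simp

lemma lambda_dc_erasable:
  assumes lam: "0 \<le> lam" "lam \<le> 1"
  shows "erasable k (lambda_dc lam)"
  unfolding erasable_def
proof (intro allI impI)
  fix P :: "real set" and C assume P: "finite P \<and> card P = k \<and> valid_config k C"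
  define Q where "Q = sorted_list_of_set P"
  have Q: "length Q = k" "sorted_wrt (<) Q" "set Q = P" using P by (simp_all add: Q_def)
  obtain rs ps where up: "set rs \<subseteq> P" "valid_prediction k rs ps"
    "valid_config k (alg_final (lambda_dc lam) C rs ps)" "\<forall>m<k. Q ! m \<le> alg_final (lambda_dc lam) C rs ps ! m"
    using lambda_dc_reach_above[OF Q(1,2) lam, of C] P Q(3) by blast
  let ?X = "alg_final (lambda_dc lam) C rs ps"
  have X: "length ?X = k" using up(3) by (simp add: valid_config_def)
  have "\<forall>m<k. mirror ?X ! m \<le> mirror Q ! m"
    using up(4) X Q(1) by (auto simp: nth_mirror)
  then obtain rs' ps' where down: "set rs' \<subseteq> set (mirror Q)" "valid_prediction k rs' ps'"
    "\<forall>m<k. mirror Q ! m \<le> alg_final (lambda_dc lam) (mirror ?X) rs' ps' ! m"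
    "\<forall>m<k. alg_final (lambda_dc lam) (mirror ?X) rs' ps' ! m \<le> mirror Q ! m"
    "valid_config k (alg_final (lambda_dc lam) (mirror ?X) rs' ps')"
    using lambda_dc_reach_above[of "mirror Q" k lam "mirror ?X"] Q up(3) lam
    by (auto simp: sorted_wrt_less_mirror valid_config_def sorted_mirror)
  then have "alg_final (lambda_dc lam) (mirror ?X) rs' ps' = mirror Q"
    using Q(1) by (intro nth_equalityI) (auto simp: valid_config_def intro: order.antisym)
  then have "alg_final (lambda_dc lam) ?X (map uminus rs') (map (\<lambda>p. Suc k - p) ps') = Q"
    using alg_final_lambda_dc_mirror[of "mirror ?X" k rs' ps' lam] X down(2) by simp
  moreover have "set (map uminus rs') \<subseteq> P" using down(1) Q(3) by (auto simp: mem_mirror_iff)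
  moreover have "valid_prediction k (map uminus rs') (map (\<lambda>p. Suc k - p) ps') \<and> length rs = length ps"
    using down(2) up(2) by (auto simp: valid_prediction_def)
  ultimately show "\<exists>rs ps. set rs \<subseteq> P \<and> valid_prediction k rs ps \<and>
      alg_final (lambda_dc lam) C rs ps = sorted_list_of_set P"
    using up(1,2) alg_final_append[of rs ps "lambda_dc lam" C]
    by (intro exI[of _ "rs @ map uminus rs'"] exI[of _ "ps @ map (\<lambda>p. Suc k - p) ps'"])
      (auto simp: valid_prediction_def Q_def)
qed

theorem theorem1:
  fixes k :: nat and lam :: real
  assumes "1 \<le> k" and "0 \<le> lam" and "lam \<le> 1"
  shows "\<exists>A :: mc_alg. memory_constrained k A \<and>
           (\<exists>c :: real list \<Rightarrow> real. (\<forall>C. 0 \<le> c C) \<and>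
              (\<forall>C0 rs ps. valid_config k C0 \<and> valid_prediction k rs ps \<longrightarrow>
                 alg_cost A C0 rs ps
                   \<le> LA_bound lam k (OPT k C0 rs) (pred_error k C0 rs ps) + c C0))"
proof (intro exI conjI allI impI)
  show "memory_constrained k (lambda_dc lam)"
    using lambda_dc_serves[OF assms(2,1)] lambda_dc_erasable[OF assms(2,3)]
    by (simp add: memory_constrained_def)
  define c where "c C = \<bar>tilt_term lam k C\<bar> + \<bar>tilt_term (1 / lam) k C\<bar>" for C
  show "0 \<le> c C" for C by (simp add: c_def)
  fix C0 rs ps assume I: "valid_config k C0 \<and> valid_prediction k rs ps"
  have c: "tilt_term lam k C0 \<le> c C0" "tilt_term (1 / lam) k C0 \<le> c C0"
    unfolding c_def by linarith+
  have "alg_cost (lambda_dc lam) C0 rs ps \<le> alpha lam k * (OPT k C0 rs + pred_error k C0 rs ps) + c C0"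
    using alg_cost_le_alpha_ftp_cost[OF assms(2,3,1), of C0 C0 rs ps] I c(1)
    by (simp add: potential_self pred_error_def)
  moreover have "alg_cost (lambda_dc lam) C0 rs ps \<le> beta lam k * OPT k C0 rs + c C0" if "0 < lam"
    using alg_cost_le_beta_OPT[OF that assms(3,1), of C0 rs ps] I c(2) by simp
  ultimately show "alg_cost (lambda_dc lam) C0 rs ps
      \<le> LA_bound lam k (OPT k C0 rs) (pred_error k C0 rs ps) + c C0"
    using assms(2) by (auto simp: LA_bound_def)
qed

end
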